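(* In the FAVANO process (with either choice of weights $\alpha^i_{t+1}$), assume each $\nabla f_i$ is $L$-Lipschitz, the stochastic gradients have bounded variance $\sigma^2$, the bounded gradient dissimilarity condition holds with constants $G^2\ge0$, $B^2\ge1$, and $\eta<\frac{1}{4LK^2}$ and $\eta<\frac{1}{2LK}$. Then for every time step $t\ge0$, $$\sum_{i=1}^n\mathbb{E}\big\langle\nabla f(\mu_t),-\check h^i_{t+1}\big\rangle\le 20L^2\,\mathbb{E}[\Phi_t]+4nL^2\eta^2K^2(\sigma^2+4G^2)+n\Big(16L^2\eta^2K^2B^2-\frac34\Big)\mathbb{E}\|\nabla f(\mu_t)\|^2 .$$
   Context: FAVANO process. Fix integers $n\ge1$, $1\le s\le n$, $K\ge1$, $d\ge1$, a step size $\eta>0$ and differentiable $f_1,\dots,f_n:\mathbb{R}^d\to\mathbb{R}$, $f=\frac1n\sum_i f_i$. All random variables live on one probability space. For each client $i$ a stochastic gradient oracle returns, at a query point $x$, $\widetilde g^i(x)=\nabla f_i(x)+\xi$ where, conditionally on everything generated before the query (including $x$), $\xi$ has mean zero (each query uses fresh noise). Initialize $w_0\in\mathbb{R}^d$ deterministic and $w_0^i=w_0$ for all $i$. For each $t\ge1$, each client $i$ and each $q\ge1$ define recursively $\widetilde h^i_{t,q}=\widetilde g^i\big(w^i_{t-1}-\eta\sum_{r=1}^{q-1}\widetilde h^i_{t,r}\big)$ and $h^i_{t,q}=\nabla f_i\big(w^i_{t-1}-\eta\sum_{r=1}^{q-1}\widetilde h^i_{t,r}\big)$. At each $t\ge1$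 there are random integers $E^1_t,\dots,E^n_t\ge0$ with $\mathbf{P}(E^i_t>0)>0$, and a random subset $\mathcal{S}_t\subseteq\{1,\dots,n\}$ uniformly distributed among subsets of size $s$; the family $(\mathcal S_t,E^1_t,\dots,E^n_t)$ is independent of all the other randomness (the past up to time $t-1$ and all $\widetilde h^i_{t,q}$), and $\mathcal S_t$ is independent of $(E^i_t)_i$. The weight $\alpha^i_t$ is either $\mathbf{P}(E^i_t>0)\,(E^i_t\wedge K)$ (stochastic version) or $\mathbb{E}[E^i_t\wedge K]$ (deterministic version), where $a\wedge b=\min(a,b)$. Set $\check h^i_t=\frac{1}{\alpha^i_t}\sum_{q=1}^{E^i_t\wedge K}\widetilde h^i_{t,q}$ if $E^i_t>0$ and $\check h^i_t=0$ otherwise. Updates: $w_t=\frac{1}{s+1}\big(w_{t-1}+\sum_{i\in\mathcal S_t}(w^i_{t-1}-\eta\check h^i_t)\big)$; $w^i_t=w_t$ for $i\in\mathcal S_t$ and $w^i_t=w^i_{t-1}$ for $i\notin\mathcal S_t$. Define $\mu_t=\frac{1}{n+1}\big(w_t+\sum_{i=1}^n w^i_t\big)$ and $\Phi_t=\|w_t-\mu_t\|^2+\sum_{i=1}^n\|w^i_t-\mu_t\|^2$. All expectations appearing are assumed finite. Smoothness: $\|\nabla f_i(x)-\nabla f_i(y)\|\le L\|x-y\|$ for all $i,x,y$, with $L>0$. Bounded variance: conditionally on everything generated before a query at $x$, $\mathbb{E}\|\widetilde g^i(x)-\nabla f_i(x)\|^2\le\sigma^2$. Bounded gradient dissimilarity: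 for all $x\in\mathbb{R}^d$, $\frac1n\sum_{i=1}^n\|\nabla f_i(x)\|^2\le G^2+B^2\|\nabla f(x)\|^2$. *)

theory Defs
  imports "HOL-Probability.Probability"
begin

text \<open>Clients are indexed by i in {1..n}, rounds by t, local steps by q >= 1.
  Random objects are functions of the sample point w in the space of a probability measure M.
  htil t i q is the stochastic gradient returned at the q-th local query of client i in round t,
  E t i the number of local steps, S t the sampled subset.\<close>

definition hcheck :: "real \<Rightarrow> nat \<Rightarrow> nat \<Rightarrow> (nat \<Rightarrow> 'v::real_vector) \<Rightarrow> 'v" where
  "hcheck alpha K e ht = (if e > 0 then (1 / alpha) *\<^sub>R (\<Sum>q = 1..min e K. ht q) else 0)"

text \<open>Pathwise recursion of the server and client iterates (w_t, (w^i_t)_i).\<close>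
fun fav_state :: "real \<Rightarrow> nat \<Rightarrow> 'v::real_vector \<Rightarrow> (nat \<Rightarrow> nat set) \<Rightarrow> (nat \<Rightarrow> nat \<Rightarrow> 'v)
    \<Rightarrow> nat \<Rightarrow> 'v \<times> (nat \<Rightarrow> 'v)" where
  "fav_state \<eta> s w0 S hc 0 = (w0, (\<lambda>i. w0))"
| "fav_state \<eta> s w0 S hc (Suc t) =
     (let w = fst (fav_state \<eta> s w0 S hc t); wi = snd (fav_state \<eta> s w0 S hc t);
          w' = (1 / real (s + 1)) *\<^sub>R (w + (\<Sum>i\<in>S (Suc t). wi i - \<eta> *\<^sub>R hc (Suc t) i))
      in (w', (\<lambda>i. if i \<in> S (Suc t) then w' else wi i)))"

definition fav_alpha :: "'a measure \<Rightarrow> bool \<Rightarrow> nat \<Rightarrow> (nat \<Rightarrow> nat \<Rightarrow> 'a \<Rightarrow> nat)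
    \<Rightarrow> nat \<Rightarrow> nat \<Rightarrow> 'a \<Rightarrow> real" where
  "fav_alpha M stoch K E t i \<omega> =
     (if stoch then measure M {\<omega>' \<in> space M. E t i \<omega>' > 0} * real (min (E t i \<omega>) K)
      else (\<integral>\<omega>'. real (min (E t i \<omega>') K) \<partial>M))"

definition fav_hc :: "'a measure \<Rightarrow> bool \<Rightarrow> nat \<Rightarrow> (nat \<Rightarrow> nat \<Rightarrow> 'a \<Rightarrow> nat)
    \<Rightarrow> (nat \<Rightarrow> nat \<Rightarrow> nat \<Rightarrow> 'a \<Rightarrow> 'v::real_vector) \<Rightarrow> nat \<Rightarrow> nat \<Rightarrow> 'a \<Rightarrow> 'v" where
  "fav_hc M stoch K E htil t i \<omega> =
     hcheck (fav_alpha M stoch K E t i \<omega>) K (E t i \<omega>) (\<lambda>q. htil t i q \<omega>)"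

definition fav_path :: "'a measure \<Rightarrow> bool \<Rightarrow> nat \<Rightarrow> real \<Rightarrow> nat \<Rightarrow> 'v::real_vector
    \<Rightarrow> (nat \<Rightarrow> 'a \<Rightarrow> nat set) \<Rightarrow> (nat \<Rightarrow> nat \<Rightarrow> 'a \<Rightarrow> nat)
    \<Rightarrow> (nat \<Rightarrow> nat \<Rightarrow> nat \<Rightarrow> 'a \<Rightarrow> 'v) \<Rightarrow> nat \<Rightarrow> 'a \<Rightarrow> 'v \<times> (nat \<Rightarrow> 'v)" where
  "fav_path M stoch K \<eta> s w0 S E htil t \<omega> =
     fav_state \<eta> s w0 (\<lambda>r. S r \<omega>) (\<lambda>r j. fav_hc M stoch K E htil r j \<omega>) t"


definition fav_query :: "'a measure \<Rightarrow> bool \<Rightarrow> nat \<Rightarrow> real \<Rightarrow> nat \<Rightarrow> 'v::real_vector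
    \<Rightarrow> (nat \<Rightarrow> 'a \<Rightarrow> nat set) \<Rightarrow> (nat \<Rightarrow> nat \<Rightarrow> 'a \<Rightarrow> nat)
    \<Rightarrow> (nat \<Rightarrow> nat \<Rightarrow> nat \<Rightarrow> 'a \<Rightarrow> 'v) \<Rightarrow> nat \<Rightarrow> nat \<Rightarrow> nat \<Rightarrow> 'a \<Rightarrow> 'v" where
  "fav_query M stoch K \<eta> s w0 S E htil r i q \<omega> =
     snd (fav_path M stoch K \<eta> s w0 S E htil (r - 1) \<omega>) i - \<eta> *\<^sub>R (\<Sum>p = 1..<q. htil r i p \<omega>)"

definition fav_mu :: "'a measure \<Rightarrow> bool \<Rightarrow> nat \<Rightarrow> real \<Rightarrow> nat \<Rightarrow> nat \<Rightarrow> 'v::real_vector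
    \<Rightarrow> (nat \<Rightarrow> 'a \<Rightarrow> nat set) \<Rightarrow> (nat \<Rightarrow> nat \<Rightarrow> 'a \<Rightarrow> nat)
    \<Rightarrow> (nat \<Rightarrow> nat \<Rightarrow> nat \<Rightarrow> 'a \<Rightarrow> 'v) \<Rightarrow> nat \<Rightarrow> 'a \<Rightarrow> 'v" where
  "fav_mu M stoch K \<eta> n s w0 S E htil t \<omega> =
     (let P = fav_path M stoch K \<eta> s w0 S E htil t \<omega> in
       (1 / real (n + 1)) *\<^sub>R (fst P + (\<Sum>i = 1..n. snd P i)))"

definition fav_Phi :: "'a measure \<Rightarrow> bool \<Rightarrow> nat \<Rightarrow> real \<Rightarrow> nat \<Rightarrow> nat \<Rightarrow> 'v::real_normed_vector
    \<Rightarrow> (nat \<Rightarrow> 'a \<Rightarrow> nat set) \<Rightarrow> (nat \<Rightarrow> nat \<Rightarrow> 'a \<Rightarrow> nat)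
    \<Rightarrow> (nat \<Rightarrow> nat \<Rightarrow> nat \<Rightarrow> 'a \<Rightarrow> 'v) \<Rightarrow> nat \<Rightarrow> 'a \<Rightarrow> real" where
  "fav_Phi M stoch K \<eta> n s w0 S E htil t \<omega> =
     (let P = fav_path M stoch K \<eta> s w0 S E htil t \<omega>; m = fav_mu M stoch K \<eta> n s w0 S E htil t \<omega> in
       norm (fst P - m)^2 + (\<Sum>i = 1..n. norm (snd P i - m)^2))"

definition gen_events :: "'a measure \<Rightarrow> 'b measure \<Rightarrow> ('a \<Rightarrow> 'b) \<Rightarrow> 'a set set" where
  "gen_events M N X = {X -` B \<inter> space M | B. B \<in> sets N}"

definition past_gen :: "'a measure \<Rightarrow> nat \<Rightarrow> (nat \<Rightarrow> 'a \<Rightarrow> nat set) \<Rightarrow> (nat \<Rightarrow> nat \<Rightarrow> 'a \<Rightarrow> nat)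
    \<Rightarrow> (nat \<Rightarrow> nat \<Rightarrow> nat \<Rightarrow> 'a \<Rightarrow> 'v::real_normed_vector) \<Rightarrow> nat \<Rightarrow> 'a set set" where
  "past_gen M n S E htil t =
     (\<Union>r\<in>{1..t}. gen_events M (count_space UNIV) (S r)
        \<union> (\<Union>j\<in>{1..n}. gen_events M (count_space UNIV) (E r j)
        \<union> (\<Union>q\<in>{1..}. gen_events M borel (htil r j q))))"

text \<open>Sigma-algebra of everything generated before the q-th query of client i in round t.\<close>
definition query_sa :: "'a measure \<Rightarrow> nat \<Rightarrow> (nat \<Rightarrow> 'a \<Rightarrow> nat set) \<Rightarrow> (nat \<Rightarrow> nat \<Rightarrow> 'a \<Rightarrow> nat)
    \<Rightarrow> (nat \<Rightarrow> nat \<Rightarrow> nat \<Rightarrow> 'a \<Rightarrow> 'v::real_normed_vector) \<Rightarrow> nat \<Rightarrow> nat \<Rightarrow> nat \<Rightarrow> 'a set set" where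
  "query_sa M n S E htil t i q =
     sigma_sets (space M) (past_gen M n S E htil (t - 1)
        \<union> (\<Union>r\<in>{1..<q}. gen_events M borel (htil t i r)))"

text \<open>Sigma-algebra of all randomness other than (S_t, E_t): past up to t-1 and all htil_{t,q}.\<close>
definition other_sa :: "'a measure \<Rightarrow> nat \<Rightarrow> (nat \<Rightarrow> 'a \<Rightarrow> nat set) \<Rightarrow> (nat \<Rightarrow> nat \<Rightarrow> 'a \<Rightarrow> nat)
    \<Rightarrow> (nat \<Rightarrow> nat \<Rightarrow> nat \<Rightarrow> 'a \<Rightarrow> 'v::real_normed_vector) \<Rightarrow> nat \<Rightarrow> 'a set set" where
  "other_sa M n S E htil t =
     sigma_sets (space M) (past_gen M n S E htil (t - 1)
        \<union> (\<Union>j\<in>{1..n}. \<Union>q\<in>{1..}. gen_events M borel (htil t j q)))"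

end

theory Submission
  imports Defs
begin

(* Fix a client i and let g = \<nabla>f(\<mu>\<^sub>t). The aggregated update of client i combines its local
   stochastic gradients h\<^sub>q with weights that depend only on its step count; since the step count is
   independent of everything else and the expected weights sum to one, E\<langle>g, -update\<rangle> is a convex
   combination of the E\<langle>g, -h\<^sub>q\<rangle>. The oracle noise is orthogonal to the past-measurable g, so
   E\<langle>g, -h\<^sub>q\<rangle> = -E\<langle>g, \<nabla>f\<^sub>i(x\<^sub>q)\<rangle> at the query point x\<^sub>q, and Lipschitz continuity with Young's
   inequality bounds this by -E\<langle>g, \<nabla>f\<^sub>i(\<mu>\<^sub>t)\<rangle> + E|g|\<^sup>2/4 + L\<^sup>2 E|x\<^sub>q - \<mu>\<^sub>t|\<^sup>2. The drift of the
   query points away from w\<^sup>i\<^sub>t satisfies a recursive bound that closes because \<eta>\<^sup>2K\<^sup>2L\<^sup>2 \<le> 1/16.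
   Summing over the clients, with \<Sum>\<^sub>i \<nabla>f\<^sub>i = n\<nabla>f, \<Sum>\<^sub>i |w\<^sup>i\<^sub>t - \<mu>\<^sub>t|\<^sup>2 \<le> \<Phi>\<^sub>t and the dissimilarity
   bound, gives the claim. *)

section \<open>Elementary estimates\<close>

lemma abs_inner_le_sum_sq: "\<bar>a \<bullet> b\<bar> \<le> norm a ^ 2 + norm (b :: 'v::real_inner) ^ 2"
proof -
  have "\<bar>a \<bullet> b\<bar> \<le> norm a * norm b" by (rule Cauchy_Schwarz_ineq2)
  also have "\<dots> \<le> norm a ^ 2 + norm b ^ 2"
    using sum_squares_bound[of "norm a" "norm b"] mult_nonneg_nonneg[OF norm_ge_zero norm_ge_zero, of a b]
    by linarith
  finally show ?thesis .
qed

lemma integrable_inner_if_sq_integrable: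
  fixes a b :: "'a \<Rightarrow> 'v::euclidean_space"
  assumes "a \<in> borel_measurable M" "b \<in> borel_measurable M"
    "integrable M (\<lambda>\<omega>. norm (a \<omega>)^2)" "integrable M (\<lambda>\<omega>. norm (b \<omega>)^2)"
  shows "integrable M (\<lambda>\<omega>. a \<omega> \<bullet> b \<omega>)"
  by (rule Bochner_Integration.integrable_bound[OF Bochner_Integration.integrable_add[OF assms(3,4)]])
     (use assms(1,2) abs_inner_le_sum_sq in auto)

lemma integrable_nonneg_le:
  fixes f g :: "'a \<Rightarrow> real"
  assumes "integrable M f" "g \<in> borel_measurable M" "\<And>\<omega>. 0 \<le> g \<omega>" "\<And>\<omega>. g \<omega> \<le> f \<omega>"
  shows "integrable M g"
  by (rule Bochner_Integration.integrable_bound[OF assms(1,2)])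
     (use assms(3,4) in \<open>auto simp: abs_le_iff order_trans[OF assms(3,4)]\<close>)

lemma sq_sum3_le: "((a::real) + b + c)^2 \<le> 3 * (a^2 + b^2 + c^2)"
proof -
  have "0 \<le> (a-b)^2 + (b-c)^2 + (a-c)^2" by simp
  then show ?thesis by (simp add: power2_eq_square algebra_simps)
qed

lemma norm_diff_sq_le: "norm (a - b)^2 \<le> 2 * norm a ^ 2 + 2 * norm (b :: 'v::real_normed_vector) ^ 2"
proof -
  have "norm (a - b)^2 \<le> (norm a + norm b)^2" by (rule power_mono[OF norm_triangle_ineq4 norm_ge_zero])
  moreover have "0 \<le> (norm a - norm b)^2" by simp
  ultimately show ?thesis by (simp add: power2_eq_square algebra_simps)
qed

lemma norm_diff_sq_le_weighted: "norm (a - b)^2 \<le> 5 * norm a ^ 2 + 5/4 * norm (b :: 'v::real_normed_vector) ^ 2"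
proof -
  have "norm (a - b)^2 \<le> (norm a + norm b)^2" by (rule power_mono[OF norm_triangle_ineq4 norm_ge_zero])
  moreover have "0 \<le> (2 * norm a - norm b / 2)^2" by simp
  ultimately show ?thesis by (simp add: power2_eq_square algebra_simps)
qed

lemma norm_sum_sq_le_card:
  fixes v :: "'i \<Rightarrow> 'v::real_normed_vector"
  shows "norm (\<Sum>p\<in>A. v p)^2 \<le> real (card A) * (\<Sum>p\<in>A. norm (v p)^2)"
proof -
  have "norm (\<Sum>p\<in>A. v p)^2 \<le> (\<Sum>p\<in>A. norm (v p))^2" by (rule power_mono[OF norm_sum norm_ge_zero])
  also have "\<dots> \<le> (\<Sum>p\<in>A. norm (v p)^2) * card A" by (rule sum_squared_le_sum_of_squares)
  finally show ?thesis by (simp add: mult.commute)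
qed

lemma lipschitz_borel_measurable:
  fixes F :: "'v::real_normed_vector \<Rightarrow> 'w::real_normed_vector"
  assumes "\<And>x y. norm (F x - F y) \<le> L * norm (x - y)" "0 \<le> L"
  shows "F \<in> borel_measurable borel"
proof -
  have "L-lipschitz_on UNIV F" by (rule lipschitz_onI) (use assms in \<open>auto simp: dist_norm\<close>)
  then show ?thesis by (intro borel_measurable_continuous_onI lipschitz_on_continuous_on)
qed

lemma gradient_of_average:
  fixes f :: "nat \<Rightarrow> 'v::euclidean_space \<Rightarrow> real"
  assumes df: "\<And>i x. i \<in> {1..n} \<Longrightarrow> (f i has_derivative (\<lambda>h. gf i x \<bullet> h)) (at x)"
    and dF: "((\<lambda>y. (\<Sum>i = 1..n. f i y) / real n) has_derivative (\<lambda>h. gF \<bullet> h)) (at x)"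
  shows "gF = (1 / real n) *\<^sub>R (\<Sum>i = 1..n. gf i x)"
proof -
  define v where "v = (1 / real n) *\<^sub>R (\<Sum>i = 1..n. gf i x)"
  have "((\<lambda>y. (\<Sum>i = 1..n. f i y) / real n) has_derivative (\<lambda>h. (\<Sum>i = 1..n. gf i x \<bullet> h) / real n)) (at x)"
    using df by (intro bounded_linear.has_derivative[OF bounded_linear_divide] has_derivative_sum) auto
  moreover have "(\<lambda>h. (\<Sum>i = 1..n. gf i x \<bullet> h) / real n) = (\<lambda>h. v \<bullet> h)"
    by (auto simp: v_def inner_sum_left divide_inverse mult.commute)
  ultimately have "(\<lambda>h. gF \<bullet> h) = (\<lambda>h. v \<bullet> h)" using has_derivative_unique[OF dF] by simp
  then have "(gF - v) \<bullet> (gF - v) = 0" by (metis inner_diff_left right_minus_eq)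
  then show ?thesis unfolding v_def by simp
qed

lemma neg_inner_lipschitz_le:
  fixes F :: "'v::real_inner \<Rightarrow> 'v"
  assumes lip: "\<And>x y. norm (F x - F y) \<le> L * norm (x - y)" and L: "0 \<le> L"
  shows "- (g \<bullet> F x) \<le> - (g \<bullet> F m) + norm g ^ 2 / 4 + L^2 * norm (x - m)^2"
proof -
  have "g \<bullet> (F m - F x) \<le> norm g * norm (F m - F x)" by (rule order_trans[OF _ Cauchy_Schwarz_ineq2]) simp
  also have "\<dots> \<le> norm g * (L * norm (x - m))"
    using lip[of m x] by (intro mult_left_mono) (auto simp: norm_minus_commute)
  also have "\<dots> \<le> norm g ^ 2 / 4 + L^2 * norm (x - m)^2"
    using zero_le_power2[of "norm g / 2 - L * norm (x - m)"] by (simp add: power2_eq_square algebra_simps)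
  finally show ?thesis by (simp add: inner_diff_right)
qed

lemma norm_sq_noisy_gradient_le:
  fixes F :: "'v::real_normed_vector \<Rightarrow> 'v"
  assumes lip: "\<And>x y. norm (F x - F y) \<le> L * norm (x - y)" and L: "0 \<le> L"
  shows "norm (F (w - D) + \<xi>)^2
    \<le> 6 * norm (F m)^2 + 6 * L^2 * norm (w - m)^2 + 6 * L^2 * norm D ^ 2 + 2 * norm \<xi> ^ 2"
proof -
  have "norm (F (w - D)) \<le> norm (F m) + norm (F (w - D) - F m)" by (rule norm_triangle_sub)
  also have "\<dots> \<le> norm (F m) + L * (norm (w - m) + norm D)"
    using lip[of "w - D" m] mult_left_mono[OF norm_triangle_ineq4[of "w - m" D] L]
    by (simp add: algebra_simps)
  finally have "norm (F (w - D))^2 \<le> (norm (F m) + L * norm (w - m) + L * norm D)^2"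
    by (intro power_mono) (auto simp: algebra_simps)
  also have "\<dots> \<le> 3 * (norm (F m)^2 + L^2 * norm (w - m)^2 + L^2 * norm D ^ 2)"
    using sq_sum3_le[of "norm (F m)" "L * norm (w - m)" "L * norm D"] by (simp add: power_mult_distrib)
  finally show ?thesis
    using norm_diff_sq_le[of "F (w - D)" "- \<xi>"] by simp
qed

(* The bound is the fixed point of d = \<epsilon>K\<^sup>2(C + 6L\<^sup>2d) for \<epsilon>K\<^sup>2L\<^sup>2 = 1/16. *)
lemma drift_recursion_bound:
  fixes d :: "nat \<Rightarrow> real"
  assumes rec: "\<And>q. q \<in> {1..K} \<Longrightarrow> d q \<le> \<epsilon> * real (K - 1) * (\<Sum>p = 1..<q. C + 6 * L^2 * d p)"
    and \<epsilon>: "0 \<le> \<epsilon>" and C: "0 \<le> C" and small: "\<epsilon> * real K^2 * L^2 \<le> 1/16"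
  shows "q \<in> {1..K} \<Longrightarrow> d q \<le> 8/5 * \<epsilon> * real K^2 * C"
proof (induction q rule: less_induct)
  case (less q)
  define b where "b = 8/5 * \<epsilon> * real K^2 * C"
  have b0: "0 \<le> b" unfolding b_def using \<epsilon> C by simp
  have ih: "p \<in> {1..<q} \<Longrightarrow> d p \<le> b" for p using less by (auto simp: b_def)
  have "(\<Sum>p = 1..<q. C + 6 * L^2 * d p) \<le> (\<Sum>p = 1..<q. C + 6 * L^2 * b)"
    using ih by (intro sum_mono add_left_mono mult_left_mono) auto
  also have "\<dots> = real (q - 1) * (C + 6 * L^2 * b)" by simp
  finally have sum_le: "(\<Sum>p = 1..<q. C + 6 * L^2 * d p) \<le> real (q - 1) * (C + 6 * L^2 * b)" .
  have "(K - 1) * (q - 1) \<le> K * K" using less.prems by (intro mult_mono) auto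
  then have kq: "real (K - 1) * real (q - 1) \<le> real K^2"
    by (metis of_nat_mono of_nat_mult power2_eq_square)
  have "\<epsilon> * real (K - 1) * (real (q - 1) * (C + 6 * L^2 * b)) \<le> \<epsilon> * real K^2 * (C + 6 * L^2 * b)"
    using mult_right_mono[OF mult_left_mono[OF kq \<epsilon>], of "C + 6 * L^2 * b"] C b0
    by (simp add: mult.assoc)
  moreover have "\<epsilon> * real K^2 * (C + 6 * L^2 * b) \<le> b"
    using mult_right_mono[OF small b0] by (simp add: b_def algebra_simps)
  ultimately show ?case
    using less.prems rec[of q] mult_left_mono[OF sum_le, of "\<epsilon> * real (K - 1)"] \<epsilon>
    unfolding b_def by (smt (verit) of_nat_0_le_iff zero_le_mult_iff)
qed

lemma step_size_sq_le:
  fixes \<eta> L :: real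
  assumes "0 < \<eta>" "0 < L" "1 \<le> K" "\<eta> < 1 / (4 * L * real K^2)"
  shows "\<eta>^2 * real K^2 * L^2 \<le> 1/16"
proof -
  have "\<eta> * L * real K^2 < 1/4" using assms by (simp add: field_simps)
  moreover have "real K \<le> real K^2" using assms(3) by (simp add: power2_eq_square)
  ultimately have "\<eta> * L * real K \<le> 1/4"
    using assms(1,2) by (smt (verit) mult_left_mono mult_pos_pos)
  then have "(\<eta> * L * real K)^2 \<le> (1/4)^2" using assms by (intro power_mono) auto
  then show ?thesis by (simp add: power_mult_distrib power2_eq_square mult_ac)
qed

section \<open>Generated \<sigma>-algebras, conditional means and independence\<close>

lemma subalgebra_sigma:
  assumes "G \<subseteq> sets M"
  shows "subalgebra M (sigma (space M) G)"
proof -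
  have "G \<subseteq> Pow (space M)" using assms sets.sets_into_space by auto
  then show ?thesis
    unfolding subalgebra_def using sets.sigma_sets_subset[OF assms] by simp
qed

lemma measurable_sigma_generatorsI:
  assumes "G \<subseteq> Pow \<Omega>" "X \<in> \<Omega> \<rightarrow> space N"
    "\<And>B. B \<in> sets N \<Longrightarrow> X -` B \<inter> \<Omega> \<in> sigma_sets \<Omega> G"
  shows "X \<in> measurable (sigma \<Omega> G) N"
  by (rule measurableI) (use assms in auto)

lemma sigma_sets_vimage_subset:
  assumes "G \<subseteq> Pow \<Omega>" "X \<in> measurable (sigma \<Omega> G) N"
  shows "sigma_sets \<Omega> {X -` A \<inter> \<Omega> |A. A \<in> sets N} \<subseteq> sigma_sets \<Omega> G"
proof (rule sigma_sets_mono, safe)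
  fix A assume "A \<in> sets N"
  then have "X -` A \<inter> space (sigma \<Omega> G) \<in> sets (sigma \<Omega> G)"
    using assms(2) by (rule measurable_sets[rotated])
  then show "X -` A \<inter> \<Omega> \<in> sigma_sets \<Omega> G" using assms(1) by simp
qed

lemma gen_events_subset_sets: "X \<in> measurable M N \<Longrightarrow> gen_events M N X \<subseteq> sets M"
  unfolding gen_events_def by (auto intro: measurable_sets)

lemma measurable_sigma_gen_events:
  assumes "gen_events M N X \<subseteq> G" "G \<subseteq> sets M" "X \<in> space M \<rightarrow> space N"
  shows "X \<in> measurable (sigma (space M) G) N"
proof (rule measurable_sigma_generatorsI)
  show "G \<subseteq> Pow (space M)" using assms(2) by (blast dest: sets.sets_into_space)
qed (use assms in \<open>auto simp: gen_events_def\<close>)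

lemma (in prob_space) integral_mult_eq_0_if_cond_mean_0:
  fixes X Y :: "'a \<Rightarrow> real"
  assumes G: "G \<subseteq> sets M"
    and X: "X \<in> borel_measurable (sigma (space M) G)" and Y: "integrable M Y"
    and mean0: "\<And>A. A \<in> sigma_sets (space M) G \<Longrightarrow> (\<integral>\<omega>\<in>A. Y \<omega> \<partial>M) = 0"
    and XY: "integrable M (\<lambda>\<omega>. X \<omega> * Y \<omega>)"
  shows "(\<integral>\<omega>. X \<omega> * Y \<omega> \<partial>M) = 0"
proof -
  let ?F = "sigma (space M) G"
  have sub: "subalgebra M ?F" by (rule subalgebra_sigma[OF G])
  interpret F: finite_measure_subalgebra M ?F
    using sub by unfold_locales
  have "G \<subseteq> Pow (space M)" using G sets.sets_into_space by auto
  then have "AE \<omega> in M. real_cond_exp M ?F Y \<omega> = 0"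
    by (intro F.real_cond_exp_charact) (use mean0 Y in auto)
  moreover have "X \<in> borel_measurable M" by (rule measurable_from_subalg[OF sub X])
  ultimately have "(\<integral>\<omega>. X \<omega> * real_cond_exp M ?F Y \<omega> \<partial>M) = 0"
    by (auto intro: integral_eq_zero_AE)
  then show ?thesis
    using F.real_cond_exp_intg(2)[OF XY X] Y by simp
qed

lemma (in prob_space) integral_inner_eq_0_if_cond_mean_0:
  fixes X \<xi> :: "'a \<Rightarrow> 'v::euclidean_space"
  assumes G: "G \<subseteq> sets M"
    and X: "X \<in> borel_measurable (sigma (space M) G)" and \<xi>: "integrable M \<xi>"
    and mean0: "\<And>A. A \<in> sigma_sets (space M) G \<Longrightarrow> set_lebesgue_integral M A \<xi> = 0"
    and X2: "integrable M (\<lambda>\<omega>. norm (X \<omega>)^2)" and \<xi>2: "integrable M (\<lambda>\<omega>. norm (\<xi> \<omega>)^2)"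
  shows "(\<integral>\<omega>. X \<omega> \<bullet> \<xi> \<omega> \<partial>M) = 0"
proof -
  have Xm: "X \<in> borel_measurable M" by (rule measurable_from_subalg[OF subalgebra_sigma[OF G] X])
  have \<xi>m: "\<xi> \<in> borel_measurable M" using \<xi> by auto
  have coord: "integrable M (\<lambda>\<omega>. (X \<omega> \<bullet> b) * (\<xi> \<omega> \<bullet> b))"
      "(\<integral>\<omega>. (X \<omega> \<bullet> b) * (\<xi> \<omega> \<bullet> b) \<partial>M) = 0" if b: "b \<in> Basis" for b
  proof -
    have "\<bar>(X \<omega> \<bullet> b) * (\<xi> \<omega> \<bullet> b)\<bar> \<le> norm (X \<omega>)^2 + norm (\<xi> \<omega>)^2" for \<omega>
    proof -
      have "\<bar>(X \<omega> \<bullet> b) * (\<xi> \<omega> \<bullet> b)\<bar> \<le> norm (X \<omega>) * norm (\<xi> \<omega>)"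
        using Basis_le_norm[OF b] by (simp add: abs_mult mult_mono)
      also have "\<dots> \<le> norm (X \<omega>)^2 + norm (\<xi> \<omega>)^2"
        using sum_squares_bound[of "norm (X \<omega>)" "norm (\<xi> \<omega>)"]
          mult_nonneg_nonneg[OF norm_ge_zero norm_ge_zero, of "X \<omega>" "\<xi> \<omega>"] by linarith
      finally show ?thesis .
    qed
    then show int: "integrable M (\<lambda>\<omega>. (X \<omega> \<bullet> b) * (\<xi> \<omega> \<bullet> b))"
      by (intro Bochner_Integration.integrable_bound[OF Bochner_Integration.integrable_add[OF X2 \<xi>2]])
        (use Xm \<xi>m in auto)
    show "(\<integral>\<omega>. (X \<omega> \<bullet> b) * (\<xi> \<omega> \<bullet> b) \<partial>M) = 0"
    proof (rule integral_mult_eq_0_if_cond_mean_0[OF G _ _ _ int])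
      show "(\<lambda>\<omega>. X \<omega> \<bullet> b) \<in> borel_measurable (sigma (space M) G)" using X by measurable
      show "integrable M (\<lambda>\<omega>. \<xi> \<omega> \<bullet> b)" using \<xi> by auto
      fix A assume A: "A \<in> sigma_sets (space M) G"
      then have "A \<in> sets M" using sets.sigma_sets_subset[OF G] by auto
      then have "(\<integral>\<omega>. (indicator A \<omega> *\<^sub>R \<xi> \<omega>) \<bullet> b \<partial>M) = set_lebesgue_integral M A \<xi> \<bullet> b"
        unfolding set_lebesgue_integral_def by (intro integral_inner_left integrable_mult_indicator \<xi>)
      then have "(\<integral>\<omega>\<in>A. \<xi> \<omega> \<bullet> b \<partial>M) = set_lebesgue_integral M A \<xi> \<bullet> b"
        unfolding set_lebesgue_integral_def by simp
      then show "(\<integral>\<omega>\<in>A. \<xi> \<omega> \<bullet> b \<partial>M) = 0" using mean0[OF A] by simp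
    qed
  qed
  have "(\<integral>\<omega>. X \<omega> \<bullet> \<xi> \<omega> \<partial>M) = (\<integral>\<omega>. (\<Sum>b\<in>Basis. (X \<omega> \<bullet> b) * (\<xi> \<omega> \<bullet> b)) \<partial>M)"
    by (rule Bochner_Integration.integral_cong[OF refl], rule euclidean_inner)
  also have "\<dots> = (\<Sum>b\<in>Basis. \<integral>\<omega>. (X \<omega> \<bullet> b) * (\<xi> \<omega> \<bullet> b) \<partial>M)"
    using coord by (intro Bochner_Integration.integral_sum) auto
  finally show ?thesis using coord by simp
qed

lemma (in prob_space) integral_mult_indep_sigma:
  fixes Y Z :: "'a \<Rightarrow> real"
  assumes GA: "GA \<subseteq> events" and GC: "GC \<subseteq> events"
    and indep: "\<And>a c. a \<in> sigma_sets (space M) GA \<Longrightarrow> c \<in> sigma_sets (space M) GC \<Longrightarrow>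
       prob (a \<inter> c) = prob a * prob c"
    and Y: "Y \<in> borel_measurable (sigma (space M) GA)" and Y_bound: "\<And>\<omega>. \<bar>Y \<omega>\<bar> \<le> C"
    and Z: "Z \<in> borel_measurable (sigma (space M) GC)" and Zi: "integrable M Z"
  shows "integrable M (\<lambda>\<omega>. Y \<omega> * Z \<omega>)"
    and "(\<integral>\<omega>. Y \<omega> * Z \<omega> \<partial>M) = (\<integral>\<omega>. Y \<omega> \<partial>M) * (\<integral>\<omega>. Z \<omega> \<partial>M)"
proof -
  have PA: "GA \<subseteq> Pow (space M)" and PC: "GC \<subseteq> Pow (space M)"
    using GA GC by (blast dest: sets.sets_into_space)+
  have Ym: "Y \<in> borel_measurable M" by (rule measurable_from_subalg[OF subalgebra_sigma[OF GA] Y])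
  have Zm: "Z \<in> borel_measurable M" by (rule measurable_from_subalg[OF subalgebra_sigma[OF GC] Z])
  note A = sigma_sets_vimage_subset[OF PA Y] and B = sigma_sets_vimage_subset[OF PC Z]
  have ind: "indep_var borel Y borel Z"
    unfolding indep_var_eq indep_sets2_eq
    using Ym Zm A B sets.sigma_sets_subset[OF GA] sets.sigma_sets_subset[OF GC] indep
    by (auto 4 3)
  have Yi: "integrable M Y"
    by (rule integrable_const_bound[where B=C]) (use Y_bound Ym in auto)
  show "integrable M (\<lambda>\<omega>. Y \<omega> * Z \<omega>)" by (rule indep_var_integrable[OF ind Yi Zi])
  show "(\<integral>\<omega>. Y \<omega> * Z \<omega> \<partial>M) = (\<integral>\<omega>. Y \<omega> \<partial>M) * (\<integral>\<omega>. Z \<omega> \<partial>M)"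
    by (rule indep_var_lebesgue_integral[OF ind Yi Zi])
qed

lemma (in prob_space) AE_subset_if_uniform_subsets:
  fixes S :: "'a \<Rightarrow> nat set"
  assumes S: "S \<in> measurable M (count_space UNIV)" and s: "s \<le> card I" and I: "finite I"
    and unif: "\<And>A. A \<subseteq> I \<Longrightarrow> card A = s \<Longrightarrow> prob {\<omega>\<in>space M. S \<omega> = A} = 1 / real (card I choose s)"
  shows "AE \<omega> in M. S \<omega> \<subseteq> I"
proof -
  define SS where "SS = {A. A \<subseteq> I \<and> card A = s}"
  have fin: "finite SS" unfolding SS_def by (rule finite_subset[of _ "Pow I"]) (use I in auto)
  have ev: "{\<omega>\<in>space M. P (S \<omega>)} \<in> events" for P
    using measurable_sets[OF S, of "{A. P A}"] by (simp add: vimage_def Int_def conj_commute)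
  have "prob (\<Union>A\<in>SS. {\<omega>\<in>space M. S \<omega> = A}) = (\<Sum>A\<in>SS. prob {\<omega>\<in>space M. S \<omega> = A})"
    by (rule finite_measure_finite_Union) (use fin ev in \<open>auto simp: disjoint_family_on_def\<close>)
  also have "\<dots> = (\<Sum>A\<in>SS. 1 / real (card I choose s))"
    by (rule sum.cong) (auto simp: SS_def unif)
  also have "\<dots> = 1"
    using n_subsets[OF I, of s] s by (simp add: SS_def)
  finally have "1 \<le> prob {\<omega>\<in>space M. S \<omega> \<subseteq> I}"
    using finite_measure_mono[OF _ ev, of "\<Union>A\<in>SS. {\<omega>\<in>space M. S \<omega> = A}" "\<lambda>A. A \<subseteq> I"]
    by (auto simp: SS_def)
  then have "prob {\<omega>\<in>space M. S \<omega> \<subseteq> I} = 1" using prob_le_1 by (metis antisym)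
  then show ?thesis using AE_prob_1 by force
qed

section \<open>A round of local steps of one client\<close>

(* A client starts at w and performs K stochastic gradient steps ht q of size \<eta> on an objective
   whose gradient F is L-Lipschitz; the noise of each step is orthogonal to the direction g, and the
   deviation of the local iterates is measured from the point m. *)
locale local_steps = prob_space M for M :: "'a measure" +
  fixes K :: nat and \<eta> L \<sigma> :: real and F :: "'v::euclidean_space \<Rightarrow> 'v"
    and w m g :: "'a \<Rightarrow> 'v" and ht :: "nat \<Rightarrow> 'a \<Rightarrow> 'v"
  assumes L: "0 \<le> L" and step_small: "\<eta>^2 * real K^2 * L^2 \<le> 1/16"
    and lipschitz: "\<And>x y. norm (F x - F y) \<le> L * norm (x - y)"
    and w_borel: "w \<in> borel_measurable M" and m_borel: "m \<in> borel_measurable M"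
    and g_borel: "g \<in> borel_measurable M"
    and ht_borel: "\<And>q. q \<in> {1..K} \<Longrightarrow> ht q \<in> borel_measurable M"
    and g_sq: "integrable M (\<lambda>\<omega>. norm (g \<omega>)^2)"
    and dev_sq: "integrable M (\<lambda>\<omega>. norm (w \<omega> - m \<omega>)^2)"
    and F_sq: "integrable M (\<lambda>\<omega>. norm (F (m \<omega>))^2)"
    and ht_sq: "\<And>q. q \<in> {1..K} \<Longrightarrow> integrable M (\<lambda>\<omega>. norm (ht q \<omega>)^2)"
    and noise_sq: "\<And>q. q \<in> {1..K} \<Longrightarrow>
      integrable M (\<lambda>\<omega>. norm (ht q \<omega> - F (w \<omega> - \<eta> *\<^sub>R (\<Sum>p = 1..<q. ht p \<omega>)))^2)"
    and noise_var: "\<And>q. q \<in> {1..K} \<Longrightarrow>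
      (\<integral>\<omega>. norm (ht q \<omega> - F (w \<omega> - \<eta> *\<^sub>R (\<Sum>p = 1..<q. ht p \<omega>)))^2 \<partial>M) \<le> \<sigma>^2"
    and noise_orth: "\<And>q. q \<in> {1..K} \<Longrightarrow>
      (\<integral>\<omega>. g \<omega> \<bullet> (ht q \<omega> - F (w \<omega> - \<eta> *\<^sub>R (\<Sum>p = 1..<q. ht p \<omega>))) \<partial>M) = 0"
begin

definition drift :: "nat \<Rightarrow> 'a \<Rightarrow> 'v" where
  "drift q \<omega> = \<eta> *\<^sub>R (\<Sum>p = 1..<q. ht p \<omega>)"

definition noise :: "nat \<Rightarrow> 'a \<Rightarrow> 'v" where
  "noise q \<omega> = ht q \<omega> - F (w \<omega> - drift q \<omega>)"

lemma F_borel: "F \<in> borel_measurable borel"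
  by (rule lipschitz_borel_measurable[OF lipschitz L])

lemma drift_borel: "q \<in> {1..K} \<Longrightarrow> drift q \<in> borel_measurable M"
  unfolding drift_def[abs_def] using ht_borel by measurable

lemma query_borel:
  assumes "q \<in> {1..K}" shows "(\<lambda>\<omega>. F (w \<omega> - drift q \<omega>)) \<in> borel_measurable M"
proof -
  have "(\<lambda>\<omega>. w \<omega> - drift q \<omega>) \<in> borel_measurable M" using w_borel drift_borel[OF assms] by measurable
  then show ?thesis by (rule measurable_compose[OF _ F_borel])
qed

lemma noise_borel: "q \<in> {1..K} \<Longrightarrow> noise q \<in> borel_measurable M"
  unfolding noise_def[abs_def] using ht_borel query_borel by measurable

lemma noise_sq_integrable: "q \<in> {1..K} \<Longrightarrow> integrable M (\<lambda>\<omega>. norm (noise q \<omega>)^2)"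
  unfolding noise_def drift_def by (rule noise_sq)

lemma noise_sq_bound: "q \<in> {1..K} \<Longrightarrow> (\<integral>\<omega>. norm (noise q \<omega>)^2 \<partial>M) \<le> \<sigma>^2"
  unfolding noise_def drift_def by (rule noise_var)

lemma noise_orthogonal: "q \<in> {1..K} \<Longrightarrow> (\<integral>\<omega>. g \<omega> \<bullet> noise q \<omega> \<partial>M) = 0"
  unfolding noise_def drift_def by (rule noise_orth)

lemma drift_sq_le: "q \<in> {1..K} \<Longrightarrow> norm (drift q \<omega>)^2 \<le> \<eta>^2 * real (K - 1) * (\<Sum>p = 1..<q. norm (ht p \<omega>)^2)"
proof -
  assume q: "q \<in> {1..K}"
  have "norm (drift q \<omega>)^2 = \<eta>^2 * norm (\<Sum>p = 1..<q. ht p \<omega>)^2"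
    unfolding drift_def by (simp add: power_mult_distrib)
  also have "\<dots> \<le> \<eta>^2 * (real (card {1..<q}) * (\<Sum>p = 1..<q. norm (ht p \<omega>)^2))"
    by (rule mult_left_mono[OF norm_sum_sq_le_card]) simp
  also have "\<dots> \<le> \<eta>^2 * (real (K - 1) * (\<Sum>p = 1..<q. norm (ht p \<omega>)^2))"
    using q by (intro mult_left_mono mult_right_mono sum_nonneg) auto
  finally show ?thesis by (simp add: mult.assoc)
qed

lemma drift_sq_integrable: "q \<in> {1..K} \<Longrightarrow> integrable M (\<lambda>\<omega>. norm (drift q \<omega>)^2)"
  by (rule integrable_nonneg_le[where f="\<lambda>\<omega>. \<eta>^2 * real (K - 1) * (\<Sum>p = 1..<q. norm (ht p \<omega>)^2)"])
    (use ht_sq drift_borel drift_sq_le in auto)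

lemma query_dev_sq_integrable:
  "q \<in> {1..K} \<Longrightarrow> integrable M (\<lambda>\<omega>. norm (w \<omega> - drift q \<omega> - m \<omega>)^2)"
  by (rule integrable_nonneg_le[where f="\<lambda>\<omega>. 5 * norm (w \<omega> - m \<omega>)^2 + 5/4 * norm (drift q \<omega>)^2"])
    (use dev_sq drift_sq_integrable w_borel m_borel drift_borel
      norm_diff_sq_le_weighted[of "w _ - m _" "drift q _"] in \<open>auto simp: algebra_simps\<close>)

lemma drift_bound:
  assumes q: "q \<in> {1..K}"
  shows "(\<integral>\<omega>. norm (drift q \<omega>)^2 \<partial>M) \<le> 8/5 * \<eta>^2 * real K^2 *
    (6 * (\<integral>\<omega>. norm (F (m \<omega>))^2 \<partial>M) + 6 * L^2 * (\<integral>\<omega>. norm (w \<omega> - m \<omega>)^2 \<partial>M) + 2 * \<sigma>^2)"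
proof (rule drift_recursion_bound[OF _ _ _ step_small q])
  define pw where "pw p \<omega> = 6 * norm (F (m \<omega>))^2 + 6 * L^2 * norm (w \<omega> - m \<omega>)^2
    + 6 * L^2 * norm (drift p \<omega>)^2 + 2 * norm (noise p \<omega>)^2" for p \<omega>
  fix q assume q: "q \<in> {1..K}"
  then have pK: "p \<in> {1..<q} \<Longrightarrow> p \<in> {1..K}" for p by auto
  have pw_int: "p \<in> {1..K} \<Longrightarrow> integrable M (pw p)" for p
    unfolding pw_def[abs_def] using F_sq dev_sq drift_sq_integrable noise_sq_integrable by auto
  have ht_le: "norm (ht p \<omega>)^2 \<le> pw p \<omega>" for p \<omega>
    using norm_sq_noisy_gradient_le[OF lipschitz L, where w="w \<omega>" and D="drift p \<omega>" and m="m \<omega>"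
        and \<xi>="noise p \<omega>"]
    by (simp add: pw_def noise_def)
  have "(\<integral>\<omega>. norm (drift q \<omega>)^2 \<partial>M) \<le> (\<integral>\<omega>. \<eta>^2 * real (K - 1) * (\<Sum>p = 1..<q. pw p \<omega>) \<partial>M)"
    using q pK pw_int drift_sq_integrable drift_sq_le ht_le
    by (intro integral_mono) (auto intro!: order_trans[OF drift_sq_le] mult_left_mono sum_mono)
  also have "\<dots> = \<eta>^2 * real (K - 1) * (\<Sum>p = 1..<q. \<integral>\<omega>. pw p \<omega> \<partial>M)"
    using pK pw_int by (simp add: Bochner_Integration.integral_sum)
  also have "\<dots> \<le> \<eta>^2 * real (K - 1) * (\<Sum>p = 1..<q. 6 * (\<integral>\<omega>. norm (F (m \<omega>))^2 \<partial>M)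
      + 6 * L^2 * (\<integral>\<omega>. norm (w \<omega> - m \<omega>)^2 \<partial>M) + 2 * \<sigma>^2 + 6 * L^2 * (\<integral>\<omega>. norm (drift p \<omega>)^2 \<partial>M))"
    using pK noise_sq_bound F_sq dev_sq drift_sq_integrable noise_sq_integrable
    by (intro mult_left_mono sum_mono) (auto simp: pw_def)
  finally show "(\<integral>\<omega>. norm (drift q \<omega>)^2 \<partial>M) \<le> \<eta>^2 * real (K - 1) * (\<Sum>p = 1..<q. 6 * (\<integral>\<omega>. norm (F (m \<omega>))^2 \<partial>M)
      + 6 * L^2 * (\<integral>\<omega>. norm (w \<omega> - m \<omega>)^2 \<partial>M) + 2 * \<sigma>^2 + 6 * L^2 * (\<integral>\<omega>. norm (drift p \<omega>)^2 \<partial>M))" .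
qed (auto intro!: add_nonneg_nonneg integral_nonneg_AE)

lemma query_dev_bound:
  assumes q: "q \<in> {1..K}"
  shows "(\<integral>\<omega>. norm (w \<omega> - drift q \<omega> - m \<omega>)^2 \<partial>M) \<le> 20 * (\<integral>\<omega>. norm (w \<omega> - m \<omega>)^2 \<partial>M)
    + 4 * \<eta>^2 * real K^2 * \<sigma>^2 + 16 * \<eta>^2 * real K^2 * (\<integral>\<omega>. norm (F (m \<omega>))^2 \<partial>M)"
proof -
  define A where "A = (\<integral>\<omega>. norm (w \<omega> - m \<omega>)^2 \<partial>M)"
  define B where "B = (\<integral>\<omega>. norm (F (m \<omega>))^2 \<partial>M)"
  define e where "e = \<eta>^2 * real K^2"
  have A0: "0 \<le> A" and B0: "0 \<le> B" unfolding A_def B_def by (auto intro!: integral_nonneg_AE)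
  have "(\<integral>\<omega>. norm (w \<omega> - drift q \<omega> - m \<omega>)^2 \<partial>M)
      \<le> (\<integral>\<omega>. 5 * norm (w \<omega> - m \<omega>)^2 + 5/4 * norm (drift q \<omega>)^2 \<partial>M)"
    using query_dev_sq_integrable[OF q] dev_sq drift_sq_integrable[OF q]
      norm_diff_sq_le_weighted[of "w _ - m _" "drift q _"]
    by (intro integral_mono) (auto simp: algebra_simps)
  also have "\<dots> = 5 * A + 5/4 * (\<integral>\<omega>. norm (drift q \<omega>)^2 \<partial>M)"
    using dev_sq drift_sq_integrable[OF q] by (simp add: A_def)
  also have "\<dots> \<le> 5 * A + 5/4 * (8/5 * \<eta>^2 * real K^2 * (6 * B + 6 * L^2 * A + 2 * \<sigma>^2))"
    using drift_bound[OF q] unfolding A_def B_def by linarith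
  also have "\<dots> = 5 * A + 12 * (e * B) + 12 * (e * L^2 * A) + 4 * e * \<sigma>^2"
    by (simp add: e_def algebra_simps)
  also have "\<dots> \<le> 20 * A + 4 * e * \<sigma>^2 + 16 * e * B"
  proof -
    have "e * L^2 * A * 16 \<le> A" using mult_right_mono[OF step_small A0] by (simp add: e_def)
    moreover have "0 \<le> e * B" using B0 by (simp add: e_def)
    ultimately show ?thesis using A0 by linarith
  qed
  finally show ?thesis unfolding A_def B_def e_def by (simp add: mult.assoc)
qed

lemma local_gradient_bound:
  assumes q: "q \<in> {1..K}"
  shows "(\<integral>\<omega>. g \<omega> \<bullet> - ht q \<omega> \<partial>M) \<le> - (\<integral>\<omega>. g \<omega> \<bullet> F (m \<omega>) \<partial>M) + (\<integral>\<omega>. norm (g \<omega>)^2 \<partial>M) / 4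
    + L^2 * (20 * (\<integral>\<omega>. norm (w \<omega> - m \<omega>)^2 \<partial>M) + 4 * \<eta>^2 * real K^2 * \<sigma>^2
      + 16 * \<eta>^2 * real K^2 * (\<integral>\<omega>. norm (F (m \<omega>))^2 \<partial>M))"
proof -
  define x where "x \<omega> = w \<omega> - drift q \<omega>" for \<omega>
  have ht_eq: "ht q \<omega> = F (x \<omega>) + noise q \<omega>" for \<omega> by (simp add: noise_def x_def)
  have Fx_borel: "(\<lambda>\<omega>. F (x \<omega>)) \<in> borel_measurable M" unfolding x_def by (rule query_borel[OF q])
  have "integrable M (\<lambda>\<omega>. norm (F (x \<omega>))^2)"
  proof (rule integrable_nonneg_le)
    show "integrable M (\<lambda>\<omega>. 2 * norm (ht q \<omega>)^2 + 2 * norm (noise q \<omega>)^2)"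
      using ht_sq[OF q] noise_sq_integrable[OF q] by simp
    show "(\<lambda>\<omega>. norm (F (x \<omega>))^2) \<in> borel_measurable M" using Fx_borel by measurable
    show "norm (F (x \<omega>))^2 \<le> 2 * norm (ht q \<omega>)^2 + 2 * norm (noise q \<omega>)^2" for \<omega>
      using norm_diff_sq_le[of "ht q \<omega>" "noise q \<omega>"] by (simp add: ht_eq)
  qed simp
  then have gFx: "integrable M (\<lambda>\<omega>. g \<omega> \<bullet> F (x \<omega>))"
    using Fx_borel g_borel g_sq by (intro integrable_inner_if_sq_integrable)
  have g_noise: "integrable M (\<lambda>\<omega>. g \<omega> \<bullet> noise q \<omega>)"
    using noise_borel[OF q] g_borel g_sq noise_sq_integrable[OF q] by (intro integrable_inner_if_sq_integrable)
  have gFm: "integrable M (\<lambda>\<omega>. g \<omega> \<bullet> F (m \<omega>))"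
    using measurable_compose[OF m_borel F_borel] g_borel g_sq F_sq by (intro integrable_inner_if_sq_integrable)
  have "(\<integral>\<omega>. g \<omega> \<bullet> - ht q \<omega> \<partial>M) = (\<integral>\<omega>. - (g \<omega> \<bullet> F (x \<omega>)) - g \<omega> \<bullet> noise q \<omega> \<partial>M)"
    by (simp add: ht_eq inner_diff_right)
  also have "\<dots> = (\<integral>\<omega>. - (g \<omega> \<bullet> F (x \<omega>)) \<partial>M)"
    using gFx g_noise noise_orthogonal[OF q] by simp
  also have "\<dots> \<le> (\<integral>\<omega>. - (g \<omega> \<bullet> F (m \<omega>)) + norm (g \<omega>)^2 / 4 + L^2 * norm (x \<omega> - m \<omega>)^2 \<partial>M)"
    using gFx gFm g_sq query_dev_sq_integrable[OF q] neg_inner_lipschitz_le[OF lipschitz L]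
    by (intro integral_mono) (auto simp: x_def)
  also have "\<dots> = - (\<integral>\<omega>. g \<omega> \<bullet> F (m \<omega>) \<partial>M) + (\<integral>\<omega>. norm (g \<omega>)^2 \<partial>M) / 4
      + L^2 * (\<integral>\<omega>. norm (w \<omega> - drift q \<omega> - m \<omega>)^2 \<partial>M)"
    using gFm g_sq query_dev_sq_integrable[OF q] by (simp add: x_def)
  also have "\<dots> \<le> - (\<integral>\<omega>. g \<omega> \<bullet> F (m \<omega>) \<partial>M) + (\<integral>\<omega>. norm (g \<omega>)^2 \<partial>M) / 4
    + L^2 * (20 * (\<integral>\<omega>. norm (w \<omega> - m \<omega>)^2 \<partial>M) + 4 * \<eta>^2 * real K^2 * \<sigma>^2
      + 16 * \<eta>^2 * real K^2 * (\<integral>\<omega>. norm (F (m \<omega>))^2 \<partial>M))"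
    using query_dev_bound[OF q] by (intro add_left_mono mult_left_mono) auto
  finally show ?thesis .
qed

lemma weighted_gradient_bound:
  fixes c :: "nat \<Rightarrow> 'a \<Rightarrow> real"
  assumes upd: "\<And>\<omega>. u \<omega> = (\<Sum>q = 1..K. c q \<omega> *\<^sub>R ht q \<omega>)"
    and int: "\<And>q. q \<in> {1..K} \<Longrightarrow> integrable M (\<lambda>\<omega>. c q \<omega> * (g \<omega> \<bullet> - ht q \<omega>))"
    and factor: "\<And>q. q \<in> {1..K} \<Longrightarrow>
      (\<integral>\<omega>. c q \<omega> * (g \<omega> \<bullet> - ht q \<omega>) \<partial>M) = (\<integral>\<omega>. c q \<omega> \<partial>M) * (\<integral>\<omega>. g \<omega> \<bullet> - ht q \<omega> \<partial>M)"
    and nonneg: "\<And>q. q \<in> {1..K} \<Longrightarrow> 0 \<le> (\<integral>\<omega>. c q \<omega> \<partial>M)"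
    and sum1: "(\<Sum>q = 1..K. \<integral>\<omega>. c q \<omega> \<partial>M) = 1"
  shows "(\<integral>\<omega>. g \<omega> \<bullet> - u \<omega> \<partial>M) \<le> - (\<integral>\<omega>. g \<omega> \<bullet> F (m \<omega>) \<partial>M) + (\<integral>\<omega>. norm (g \<omega>)^2 \<partial>M) / 4
    + L^2 * (20 * (\<integral>\<omega>. norm (w \<omega> - m \<omega>)^2 \<partial>M) + 4 * \<eta>^2 * real K^2 * \<sigma>^2
      + 16 * \<eta>^2 * real K^2 * (\<integral>\<omega>. norm (F (m \<omega>))^2 \<partial>M))"
    (is "_ \<le> ?b")
proof -
  have "(\<integral>\<omega>. g \<omega> \<bullet> - u \<omega> \<partial>M) = (\<integral>\<omega>. (\<Sum>q = 1..K. c q \<omega> * (g \<omega> \<bullet> - ht q \<omega>)) \<partial>M)"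
    by (simp add: upd inner_sum_right sum_negf)
  also have "\<dots> = (\<Sum>q = 1..K. (\<integral>\<omega>. c q \<omega> \<partial>M) * (\<integral>\<omega>. g \<omega> \<bullet> - ht q \<omega> \<partial>M))"
    using int factor by (simp add: Bochner_Integration.integral_sum)
  also have "\<dots> \<le> (\<Sum>q = 1..K. (\<integral>\<omega>. c q \<omega> \<partial>M) * ?b)"
    using nonneg local_gradient_bound by (intro sum_mono mult_left_mono) auto
  also have "\<dots> = ?b" using sum1 by (simp add: sum_distrib_right[symmetric])
  finally show ?thesis .
qed

end

section \<open>The FAVANO recursion\<close>

lemma fav_state_cong:
  "(\<And>r. r \<in> {1..t} \<Longrightarrow> S1 r = S2 r) \<Longrightarrow> fav_state \<eta> s w0 S1 hc t = fav_state \<eta> s w0 S2 hc t"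
  by (induction t) (auto simp: Let_def)

lemma fav_state_measurable:
  fixes hc :: "nat \<Rightarrow> nat \<Rightarrow> 'a \<Rightarrow> 'v::euclidean_space" and S :: "nat \<Rightarrow> 'a \<Rightarrow> nat set"
  assumes S: "\<And>r i. r \<in> {1..t} \<Longrightarrow> {\<omega>\<in>space N. i \<in> S r \<omega>} \<in> sets N"
    and hc: "\<And>r j. r \<in> {1..t} \<Longrightarrow> j \<in> {1..n} \<Longrightarrow> hc r j \<in> borel_measurable N"
  shows "(\<lambda>\<omega>. fst (fav_state \<eta> s w0 (\<lambda>r. S r \<omega> \<inter> {1..n}) (\<lambda>r j. hc r j \<omega>) t)) \<in> borel_measurable N
    \<and> (\<forall>i. (\<lambda>\<omega>. snd (fav_state \<eta> s w0 (\<lambda>r. S r \<omega> \<inter> {1..n}) (\<lambda>r j. hc r j \<omega>) t) i) \<in> borel_measurable N)"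
  using S hc
proof (induction t)
  case (Suc t)
  define W where "W \<omega> = fav_state \<eta> s w0 (\<lambda>r. S r \<omega> \<inter> {1..n}) (\<lambda>r j. hc r j \<omega>) t" for \<omega>
  have IH: "(\<lambda>\<omega>. fst (W \<omega>)) \<in> borel_measurable N" "\<And>i. (\<lambda>\<omega>. snd (W \<omega>) i) \<in> borel_measurable N"
    using Suc unfolding W_def by auto
  have S_new: "{\<omega> \<in> space N. i \<in> S (Suc t) \<omega> \<inter> {1..n}} \<in> sets N" for i
    using Suc.prems(1)[of "Suc t" i] by (cases "i \<in> {1..n}") auto
  define W' where "W' \<omega> = (1 / real (s + 1)) *\<^sub>R (fst (W \<omega>)
      + (\<Sum>i\<in>S (Suc t) \<omega> \<inter> {1..n}. snd (W \<omega>) i - \<eta> *\<^sub>R hc (Suc t) i \<omega>))" for \<omega>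
  have "W' = (\<lambda>\<omega>. (1 / real (s + 1)) *\<^sub>R (fst (W \<omega>) + (\<Sum>i\<in>{1..n}.
      if i \<in> S (Suc t) \<omega> then snd (W \<omega>) i - \<eta> *\<^sub>R hc (Suc t) i \<omega> else 0)))"
    unfolding W'_def by (simp add: fun_eq_iff sum.inter_restrict[symmetric] Int_commute)
  also have "\<dots> \<in> borel_measurable N"
    using IH Suc.prems
    by (intro borel_measurable_scaleR borel_measurable_const borel_measurable_add borel_measurable_sum
        measurable_If borel_measurable_diff) auto
  finally have W'_borel: "W' \<in> borel_measurable N" .
  have "fav_state \<eta> s w0 (\<lambda>r. S r \<omega> \<inter> {1..n}) (\<lambda>r j. hc r j \<omega>) (Suc t)
      = (W' \<omega>, \<lambda>i. if i \<in> S (Suc t) \<omega> \<inter> {1..n} then W' \<omega> else snd (W \<omega>) i)" for \<omega>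
    unfolding fav_state.simps Let_def W_def[symmetric] W'_def[symmetric] ..
  then show ?case using W'_borel IH(2) S_new by (simp add: measurable_If)
qed simp

lemma fav_hc_measurable:
  assumes E: "E r j \<in> measurable N (count_space UNIV)"
    and htil: "\<And>q. q \<ge> 1 \<Longrightarrow> htil r j q \<in> borel_measurable N"
  shows "(\<lambda>\<omega>. fav_hc M stoch K E htil r j \<omega> :: 'v::euclidean_space) \<in> borel_measurable N"
proof -
  define \<alpha> where "\<alpha> e = (if stoch then measure M {\<omega>'\<in>space M. E r j \<omega>' > 0} * real (min e K)
      else \<integral>\<omega>'. real (min (E r j \<omega>') K) \<partial>M)" for e
  have "(\<lambda>\<omega>. hcheck (\<alpha> e) K e (\<lambda>q. htil r j q \<omega>)) \<in> borel_measurable N" for e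
    unfolding hcheck_def using htil by (cases "e > 0") (auto intro!: borel_measurable_sum borel_measurable_scaleR)
  from measurable_compose_countable[OF this E] show ?thesis
    by (simp add: fav_hc_def fav_alpha_def \<alpha>_def)
qed

lemma S_events_subset_past_gen:
  "r \<in> {1..t} \<Longrightarrow> gen_events M (count_space UNIV) (S r) \<subseteq> past_gen M n S E htil t"
  unfolding past_gen_def by blast

lemma E_events_subset_past_gen:
  "r \<in> {1..t} \<Longrightarrow> j \<in> {1..n} \<Longrightarrow> gen_events M (count_space UNIV) (E r j) \<subseteq> past_gen M n S E htil t"
  unfolding past_gen_def by blast

lemma htil_events_subset_past_gen:
  "r \<in> {1..t} \<Longrightarrow> j \<in> {1..n} \<Longrightarrow> q \<ge> 1 \<Longrightarrow> gen_events M borel (htil r j q) \<subseteq> past_gen M n S E htil t"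
  unfolding past_gen_def by fastforce

section \<open>Aggregation weights\<close>

definition fav_weight :: "'a measure \<Rightarrow> bool \<Rightarrow> nat \<Rightarrow> (nat \<Rightarrow> nat \<Rightarrow> 'a \<Rightarrow> nat)
    \<Rightarrow> nat \<Rightarrow> nat \<Rightarrow> nat \<Rightarrow> 'a \<Rightarrow> real" where
  "fav_weight M stoch K E t i q \<omega> =
     (if 0 < E t i \<omega> \<and> q \<le> E t i \<omega> then 1 / fav_alpha M stoch K E t i \<omega> else 0)"

lemma fav_hc_eq_weighted_sum:
  "fav_hc M stoch K E htil t i \<omega> = (\<Sum>q = 1..K. fav_weight M stoch K E t i q \<omega> *\<^sub>R htil t i q \<omega>)"
proof (cases "0 < E t i \<omega>")
  case True
  let ?a = "fav_alpha M stoch K E t i \<omega>"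
  have "{1..min (E t i \<omega>) K} = {q \<in> {1..K}. q \<le> E t i \<omega>}" by auto
  then have "fav_hc M stoch K E htil t i \<omega> = (\<Sum>q\<in>{q \<in> {1..K}. q \<le> E t i \<omega>}. (1 / ?a) *\<^sub>R htil t i q \<omega>)"
    using True by (simp add: fav_hc_def hcheck_def scaleR_sum_right)
  also have "\<dots> = (\<Sum>q\<in>{1..K}. if q \<le> E t i \<omega> then (1 / ?a) *\<^sub>R htil t i q \<omega> else 0)"
    by (rule sum.inter_filter) simp
  finally show ?thesis by (auto simp: fav_weight_def True intro!: sum.cong)
qed (simp add: fav_hc_def hcheck_def fav_weight_def)

context prob_space
begin

context
  fixes E :: "nat \<Rightarrow> nat \<Rightarrow> 'a \<Rightarrow> nat" and K t i :: nat
  assumes K: "1 \<le> K" and E: "E t i \<in> measurable M (count_space UNIV)"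
    and E_pos: "0 < prob {\<omega> \<in> space M. 0 < E t i \<omega>}"
begin

lemma events_steps_pos: "{\<omega> \<in> space M. 0 < E t i \<omega>} \<in> events"
  using measurable_sets[OF E, of "{0<..}"] by (simp add: vimage_def Int_def conj_commute)

lemma prob_steps_pos_le_expected_steps:
  "prob {\<omega> \<in> space M. 0 < E t i \<omega>} \<le> (\<integral>\<omega>. real (min (E t i \<omega>) K) \<partial>M)"
proof -
  have "prob {\<omega> \<in> space M. 0 < E t i \<omega>} = (\<integral>\<omega>. indicator {\<omega> \<in> space M. 0 < E t i \<omega>} \<omega> \<partial>M)"
    using events_steps_pos by simp
  also have "\<dots> \<le> (\<integral>\<omega>. real (min (E t i \<omega>) K) \<partial>M)"
    using events_steps_pos K measurable_compose[OF E, of "\<lambda>e. real (min e K)" borel]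
    by (intro integral_mono integrable_const_bound[where B="real K"]) (auto simp: indicator_def)
  finally show ?thesis .
qed

lemma fav_alpha_ge_prob:
  assumes "0 < E t i \<omega>"
  shows "prob {\<omega> \<in> space M. 0 < E t i \<omega>} \<le> fav_alpha M stoch K E t i \<omega>"
proof (cases stoch)
  case True
  have "1 \<le> real (min (E t i \<omega>) K)" using assms K by simp
  then show ?thesis
    using True mult_left_mono[of 1 _ "prob {\<omega> \<in> space M. 0 < E t i \<omega>}"] by (simp add: fav_alpha_def)
qed (use prob_steps_pos_le_expected_steps in \<open>simp add: fav_alpha_def\<close>)

lemma fav_alpha_pos: "0 < E t i \<omega> \<Longrightarrow> 0 < fav_alpha M stoch K E t i \<omega>"
  using fav_alpha_ge_prob E_pos by (meson less_le_trans)

lemma fav_weight_nonneg: "0 \<le> fav_weight M stoch K E t i q \<omega>"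
  using fav_alpha_pos[of \<omega>] by (auto simp: fav_weight_def less_imp_le)

lemma fav_weight_le: "fav_weight M stoch K E t i q \<omega> \<le> 1 / prob {\<omega> \<in> space M. 0 < E t i \<omega>}"
  using fav_alpha_ge_prob[of \<omega>] fav_alpha_pos[of \<omega>] E_pos
  by (auto simp: fav_weight_def intro!: divide_left_mono)

lemma fav_weight_measurable:
  assumes "E t i \<in> measurable N (count_space UNIV)"
  shows "fav_weight M stoch K E t i q \<in> borel_measurable N"
proof -
  define \<alpha> where "\<alpha> e = (if stoch then prob {\<omega>'\<in>space M. 0 < E t i \<omega>'} * real (min e K)
      else \<integral>\<omega>'. real (min (E t i \<omega>') K) \<partial>M)" for e
  have "fav_weight M stoch K E t i q = (\<lambda>\<omega>. (\<lambda>e. if 0 < e \<and> q \<le> e then 1 / \<alpha> e else 0) (E t i \<omega>))"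
    by (auto simp: fav_weight_def fav_alpha_def \<alpha>_def)
  then show ?thesis using measurable_compose[OF assms, of _ borel] by simp
qed

lemma fav_weight_expectation_sum: "(\<Sum>q = 1..K. \<integral>\<omega>. fav_weight M stoch K E t i q \<omega> \<partial>M) = 1"
proof -
  let ?P = "prob {\<omega> \<in> space M. 0 < E t i \<omega>}"
  have int: "integrable M (fav_weight M stoch K E t i q)" for q
    using fav_weight_measurable[OF E] fav_weight_nonneg fav_weight_le
    by (intro integrable_const_bound[where B="1 / ?P"]) auto
  have sum_eq: "(\<Sum>q = 1..K. fav_weight M stoch K E t i q \<omega>)
      = (if 0 < E t i \<omega> then real (min (E t i \<omega>) K) / fav_alpha M stoch K E t i \<omega> else 0)" for \<omega>
  proof -
    have "{q \<in> {1..K}. q \<le> E t i \<omega>} = {1..min (E t i \<omega>) K}" by auto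
    then show ?thesis by (simp add: fav_weight_def sum.inter_filter[symmetric])
  qed
  have "(\<Sum>q = 1..K. \<integral>\<omega>. fav_weight M stoch K E t i q \<omega> \<partial>M)
      = (\<integral>\<omega>. (\<Sum>q = 1..K. fav_weight M stoch K E t i q \<omega>) \<partial>M)"
    by (rule Bochner_Integration.integral_sum[symmetric]) (use int in auto)
  also have "\<dots> = (\<integral>\<omega>. (if 0 < E t i \<omega> then real (min (E t i \<omega>) K) / fav_alpha M stoch K E t i \<omega> else 0) \<partial>M)"
    by (simp only: sum_eq)
  also have "\<dots> = 1"
  proof (cases stoch)
    case True
    have "(\<integral>\<omega>. (if 0 < E t i \<omega> then real (min (E t i \<omega>) K) / fav_alpha M stoch K E t i \<omega> else 0) \<partial>M)
        = (\<integral>\<omega>. indicator {\<omega> \<in> space M. 0 < E t i \<omega>} \<omega> / ?P \<partial>M)"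
      using True K by (intro Bochner_Integration.integral_cong) (auto simp: fav_alpha_def indicator_def)
    then show ?thesis using events_steps_pos E_pos by simp
  next
    case False
    let ?Q = "\<integral>\<omega>. real (min (E t i \<omega>) K) \<partial>M"
    have "(\<integral>\<omega>. (if 0 < E t i \<omega> then real (min (E t i \<omega>) K) / fav_alpha M stoch K E t i \<omega> else 0) \<partial>M)
        = (\<integral>\<omega>. real (min (E t i \<omega>) K) / ?Q \<partial>M)"
      using False by (intro Bochner_Integration.integral_cong) (auto simp: fav_alpha_def)
    then show ?thesis using prob_steps_pos_le_expected_steps E_pos by simp
  qed
  finally show ?thesis .
qed

end

end

section \<open>A round of FAVANO\<close>

locale favano = prob_space M for M :: "'a measure" +
  fixes n s K :: nat and \<eta> L \<sigma> G B :: real and stoch :: bool and w0 :: "'v::euclidean_space"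
    and gf :: "nat \<Rightarrow> 'v \<Rightarrow> 'v" and gF :: "'v \<Rightarrow> 'v"
    and S :: "nat \<Rightarrow> 'a \<Rightarrow> nat set" and E :: "nat \<Rightarrow> nat \<Rightarrow> 'a \<Rightarrow> nat"
    and htil :: "nat \<Rightarrow> nat \<Rightarrow> nat \<Rightarrow> 'a \<Rightarrow> 'v"
  assumes n: "1 \<le> n" and s: "s \<le> n" and K: "1 \<le> K"
    and gF_avg: "\<And>x. gF x = (1 / real n) *\<^sub>R (\<Sum>i = 1..n. gf i x)"
    and L: "0 \<le> L" and lip: "\<And>i x y. i \<in> {1..n} \<Longrightarrow> norm (gf i x - gf i y) \<le> L * norm (x - y)"
    and dissim: "\<And>x. (\<Sum>i = 1..n. norm (gf i x)^2) / real n \<le> G^2 + B^2 * norm (gF x)^2"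
    and step_small: "\<eta>^2 * real K^2 * L^2 \<le> 1/16"
    and htil_meas: "\<And>r i q. r \<ge> 1 \<Longrightarrow> i \<in> {1..n} \<Longrightarrow> q \<ge> 1 \<Longrightarrow> htil r i q \<in> borel_measurable M"
    and E_meas: "\<And>r i. r \<ge> 1 \<Longrightarrow> i \<in> {1..n} \<Longrightarrow> E r i \<in> measurable M (count_space UNIV)"
    and S_meas: "\<And>r. r \<ge> 1 \<Longrightarrow> S r \<in> measurable M (count_space UNIV)"
    and noise_int: "\<And>r i q. r \<ge> 1 \<Longrightarrow> i \<in> {1..n} \<Longrightarrow> q \<ge> 1 \<Longrightarrow>
      integrable M (\<lambda>\<omega>. htil r i q \<omega> - gf i (fav_query M stoch K \<eta> s w0 S E htil r i q \<omega>))"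
    and noise_mean: "\<And>r i q A. r \<ge> 1 \<Longrightarrow> i \<in> {1..n} \<Longrightarrow> q \<ge> 1 \<Longrightarrow>
      A \<in> query_sa M n S E htil r i q \<Longrightarrow>
      set_lebesgue_integral M A (\<lambda>\<omega>. htil r i q \<omega> - gf i (fav_query M stoch K \<eta> s w0 S E htil r i q \<omega>)) = 0"
    and noise_var: "\<And>r i q A. r \<ge> 1 \<Longrightarrow> i \<in> {1..n} \<Longrightarrow> q \<ge> 1 \<Longrightarrow>
      A \<in> query_sa M n S E htil r i q \<Longrightarrow>
      (\<integral>\<^sup>+\<omega>. indicator A \<omega> * ennreal (norm (htil r i q \<omega> - gf i (fav_query M stoch K \<eta> s w0 S E htil r i q \<omega>))^2) \<partial>M)
        \<le> ennreal (\<sigma>^2) * emeasure M A"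
    and E_pos: "\<And>r i. r \<ge> 1 \<Longrightarrow> i \<in> {1..n} \<Longrightarrow> prob {\<omega> \<in> space M. E r i \<omega> > 0} > 0"
    and S_unif: "\<And>r A. r \<ge> 1 \<Longrightarrow> A \<subseteq> {1..n} \<Longrightarrow> card A = s \<Longrightarrow>
      prob {\<omega> \<in> space M. S r \<omega> = A} = 1 / real (n choose s)"
    and indep_new: "\<And>r A C. r \<ge> 1 \<Longrightarrow>
      A \<in> sigma_sets (space M) (gen_events M (count_space UNIV) (S r)
             \<union> (\<Union>j\<in>{1..n}. gen_events M (count_space UNIV) (E r j))) \<Longrightarrow>
      C \<in> other_sa M n S E htil r \<Longrightarrow> prob (A \<inter> C) = prob A * prob C"
    and int_htil: "\<And>r i q. r \<ge> 1 \<Longrightarrow> i \<in> {1..n} \<Longrightarrow> q \<ge> 1 \<Longrightarrow>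
      integrable M (\<lambda>\<omega>. norm (htil r i q \<omega>)^2)"
    and int_Phi: "\<And>r. integrable M (fav_Phi M stoch K \<eta> n s w0 S E htil r)"
    and int_grad: "\<And>r. integrable M (\<lambda>\<omega>. norm (gF (fav_mu M stoch K \<eta> n s w0 S E htil r \<omega>))^2)"
    and int_inner: "\<And>r i. i \<in> {1..n} \<Longrightarrow>
      integrable M (\<lambda>\<omega>. gF (fav_mu M stoch K \<eta> n s w0 S E htil r \<omega>) \<bullet> (- fav_hc M stoch K E htil (r + 1) i \<omega>))"
begin

abbreviation "hc \<equiv> fav_hc M stoch K E htil"
abbreviation "xq \<equiv> fav_query M stoch K \<eta> s w0 S E htil"

lemma gf_borel: "i \<in> {1..n} \<Longrightarrow> gf i \<in> borel_measurable borel"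
  using lip L by (intro lipschitz_borel_measurable)

lemma gF_borel: "gF \<in> borel_measurable borel"
  unfolding gF_avg[abs_def] using gf_borel by measurable

lemma sum_norm_gf_sq_le: "(\<Sum>i = 1..n. norm (gf i x)^2) \<le> real n * G^2 + real n * B^2 * norm (gF x)^2"
  using dissim[of x] n by (simp add: divide_le_eq algebra_simps)

lemma norm_gf_sq_le: "i \<in> {1..n} \<Longrightarrow> norm (gf i x)^2 \<le> real n * G^2 + real n * B^2 * norm (gF x)^2"
  by (rule order_trans[OF member_le_sum sum_norm_gf_sq_le]) auto

lemma sum_inner_gf: "(\<Sum>i = 1..n. v \<bullet> gf i x) = real n * (v \<bullet> gF x)"
  using n by (simp add: gF_avg inner_sum_right)

definition new_gen :: "nat \<Rightarrow> 'a set set" where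
  "new_gen r = gen_events M (count_space UNIV) (S r) \<union> (\<Union>j\<in>{1..n}. gen_events M (count_space UNIV) (E r j))"

definition other_gen :: "nat \<Rightarrow> 'a set set" where
  "other_gen r = past_gen M n S E htil (r - 1) \<union> (\<Union>j\<in>{1..n}. \<Union>q\<in>{1..}. gen_events M borel (htil r j q))"

definition query_gen :: "nat \<Rightarrow> nat \<Rightarrow> nat \<Rightarrow> 'a set set" where
  "query_gen r i q = past_gen M n S E htil (r - 1) \<union> (\<Union>p\<in>{1..<q}. gen_events M borel (htil r i p))"

lemma past_gen_events: "past_gen M n S E htil t \<subseteq> events"
  unfolding past_gen_def
  by (intro UN_least Un_least gen_events_subset_sets S_meas E_meas htil_meas) auto

lemma new_gen_events: "r \<ge> 1 \<Longrightarrow> new_gen r \<subseteq> events"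
  unfolding new_gen_def by (intro UN_least Un_least gen_events_subset_sets S_meas E_meas) auto

lemma other_gen_events: "r \<ge> 1 \<Longrightarrow> other_gen r \<subseteq> events"
  unfolding other_gen_def
  by (intro UN_least Un_least past_gen_events gen_events_subset_sets htil_meas) auto

lemma query_gen_events: "r \<ge> 1 \<Longrightarrow> i \<in> {1..n} \<Longrightarrow> query_gen r i q \<subseteq> events"
  unfolding query_gen_def
  by (intro UN_least Un_least past_gen_events gen_events_subset_sets htil_meas) auto

(* The iterates with S r \<omega> replaced by S r \<omega> \<inter> {1..n}. They agree almost surely with
   fav_path, fav_mu and fav_Phi, but unlike these they are measurable by construction. *)
definition iterates :: "nat \<Rightarrow> 'a \<Rightarrow> 'v \<times> (nat \<Rightarrow> 'v)" where
  "iterates t \<omega> = fav_state \<eta> s w0 (\<lambda>r. S r \<omega> \<inter> {1..n}) (\<lambda>r j. hc r j \<omega>) t"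

definition center :: "nat \<Rightarrow> 'a \<Rightarrow> 'v" where
  "center t \<omega> = (1 / real (n + 1)) *\<^sub>R (fst (iterates t \<omega>) + (\<Sum>i = 1..n. snd (iterates t \<omega>) i))"

definition potential :: "nat \<Rightarrow> 'a \<Rightarrow> real" where
  "potential t \<omega> = norm (fst (iterates t \<omega>) - center t \<omega>)^2 + (\<Sum>i = 1..n. norm (snd (iterates t \<omega>) i - center t \<omega>)^2)"

lemma AE_S_subset: "AE \<omega> in M. \<forall>r\<in>{1..t}. S r \<omega> \<subseteq> {1..n}"
proof -
  have "AE \<omega> in M. S r \<omega> \<subseteq> {1..n}" if "r \<in> {1..t}" for r
    using that s S_unif by (intro AE_subset_if_uniform_subsets[OF S_meas]) auto
  then show ?thesis by (subst AE_finite_all) auto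
qed

lemma AE_fav_path: "AE \<omega> in M. fav_path M stoch K \<eta> s w0 S E htil t \<omega> = iterates t \<omega>"
  using AE_S_subset[of t]
  by eventually_elim (auto simp: fav_path_def iterates_def intro!: fav_state_cong)

lemma AE_fav_mu: "AE \<omega> in M. fav_mu M stoch K \<eta> n s w0 S E htil t \<omega> = center t \<omega>"
  using AE_fav_path[of t] by eventually_elim (simp add: fav_mu_def center_def Let_def)

lemma AE_fav_Phi: "AE \<omega> in M. fav_Phi M stoch K \<eta> n s w0 S E htil t \<omega> = potential t \<omega>"
  using AE_fav_path[of t] AE_fav_mu[of t]
  by eventually_elim (simp add: fav_Phi_def potential_def Let_def)

lemma AE_query:
  "AE \<omega> in M. xq (Suc t) i q \<omega> = snd (iterates t \<omega>) i - \<eta> *\<^sub>R (\<Sum>p = 1..<q. htil (Suc t) i p \<omega>)"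
  using AE_fav_path[of t] by eventually_elim (simp add: fav_query_def)

lemma hc_borel: "r \<ge> 1 \<Longrightarrow> j \<in> {1..n} \<Longrightarrow> hc r j \<in> borel_measurable M"
  using E_meas htil_meas by (intro fav_hc_measurable) auto

lemma iterates_measurable:
  assumes Gs: "past_gen M n S E htil t \<subseteq> Gs" "Gs \<subseteq> events"
  shows "(\<lambda>\<omega>. fst (iterates t \<omega>)) \<in> borel_measurable (sigma (space M) Gs)"
    and "(\<lambda>\<omega>. snd (iterates t \<omega>) i) \<in> borel_measurable (sigma (space M) Gs)"
proof -
  have P: "Gs \<subseteq> Pow (space M)" using Gs(2) sets.sets_into_space by blast
  have "(\<lambda>\<omega>. fst (iterates t \<omega>)) \<in> borel_measurable (sigma (space M) Gs)
      \<and> (\<forall>i. (\<lambda>\<omega>. snd (iterates t \<omega>) i) \<in> borel_measurable (sigma (space M) Gs))"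
    unfolding iterates_def
  proof (rule fav_state_measurable)
    fix r i assume r: "r \<in> {1..t}"
    have "S r \<in> measurable (sigma (space M) Gs) (count_space UNIV)"
      by (rule measurable_sigma_gen_events[OF subset_trans[OF S_events_subset_past_gen[OF r] Gs(1)] Gs(2)])
        simp
    from measurable_sets[OF this, of "{A. i \<in> A}"]
    show "{\<omega> \<in> space (sigma (space M) Gs). i \<in> S r \<omega>} \<in> sets (sigma (space M) Gs)"
      by (simp add: vimage_def Int_def conj_commute)
  next
    fix r j assume r: "r \<in> {1..t}" and j: "j \<in> {1..n}"
    show "hc r j \<in> borel_measurable (sigma (space M) Gs)"
    proof (rule fav_hc_measurable)
      show "E r j \<in> measurable (sigma (space M) Gs) (count_space UNIV)"
        by (rule measurable_sigma_gen_events[OF subset_trans[OF E_events_subset_past_gen[OF r j] Gs(1)] Gs(2)])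
          simp
      show "htil r j q \<in> borel_measurable (sigma (space M) Gs)" if "q \<ge> 1" for q
        by (rule measurable_sigma_gen_events[OF subset_trans[OF htil_events_subset_past_gen[OF r j that] Gs(1)]
              Gs(2)]) simp
    qed
  qed
  then show "(\<lambda>\<omega>. fst (iterates t \<omega>)) \<in> borel_measurable (sigma (space M) Gs)"
    and "(\<lambda>\<omega>. snd (iterates t \<omega>) i) \<in> borel_measurable (sigma (space M) Gs)" by auto
qed

lemma grad_center_measurable:
  assumes "past_gen M n S E htil t \<subseteq> Gs" "Gs \<subseteq> events"
  shows "center t \<in> borel_measurable (sigma (space M) Gs)"
    and "(\<lambda>\<omega>. gF (center t \<omega>)) \<in> borel_measurable (sigma (space M) Gs)"
proof -
  show c: "center t \<in> borel_measurable (sigma (space M) Gs)"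
    unfolding center_def[abs_def] using iterates_measurable[OF assms] by measurable
  show "(\<lambda>\<omega>. gF (center t \<omega>)) \<in> borel_measurable (sigma (space M) Gs)"
    by (rule measurable_compose[OF c gF_borel])
qed

lemma measurable_past_gen_borel:
  "X \<in> borel_measurable (sigma (space M) (past_gen M n S E htil t)) \<Longrightarrow> X \<in> borel_measurable M"
  by (rule measurable_from_subalg[OF subalgebra_sigma[OF past_gen_events]])

lemma iterates_borel:
  "(\<lambda>\<omega>. fst (iterates t \<omega>)) \<in> borel_measurable M" "(\<lambda>\<omega>. snd (iterates t \<omega>) i) \<in> borel_measurable M"
  using iterates_measurable[OF order_refl past_gen_events] by (auto intro: measurable_past_gen_borel)

lemma center_borel: "center t \<in> borel_measurable M"
  and grad_center_borel: "(\<lambda>\<omega>. gF (center t \<omega>)) \<in> borel_measurable M"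
  using grad_center_measurable[OF order_refl past_gen_events] by (auto intro: measurable_past_gen_borel)

lemma potential_integrable: "integrable M (potential t)"
proof (rule integrable_cong_AE_imp[OF int_Phi[of t] _ AE_fav_Phi])
  show "potential t \<in> borel_measurable M"
    unfolding potential_def[abs_def] using iterates_borel center_borel by measurable
qed

lemma grad_center_sq_integrable: "integrable M (\<lambda>\<omega>. norm (gF (center t \<omega>))^2)"
proof (rule integrable_cong_AE_imp[OF int_grad[of t]])
  show "AE \<omega> in M. norm (gF (fav_mu M stoch K \<eta> n s w0 S E htil t \<omega>))^2 = norm (gF (center t \<omega>))^2"
    using AE_fav_mu[of t] by eventually_elim simp
qed (use grad_center_borel in measurable)

lemma client_dev_sq_integrable:
  assumes i: "i \<in> {1..n}"
  shows "integrable M (\<lambda>\<omega>. norm (snd (iterates t \<omega>) i - center t \<omega>)^2)"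
proof (rule integrable_nonneg_le[OF potential_integrable])
  show "(\<lambda>\<omega>. norm (snd (iterates t \<omega>) i - center t \<omega>)^2) \<in> borel_measurable M"
    using iterates_borel center_borel by measurable
  show "norm (snd (iterates t \<omega>) i - center t \<omega>)^2 \<le> potential t \<omega>" for \<omega>
    using member_le_sum[of i "{1..n}" "\<lambda>i. norm (snd (iterates t \<omega>) i - center t \<omega>)^2"] i
    unfolding potential_def by (simp add: add_increasing)
qed simp

lemma gf_center_sq_integrable:
  assumes i: "i \<in> {1..n}"
  shows "integrable M (\<lambda>\<omega>. norm (gf i (center t \<omega>))^2)"
proof (rule integrable_nonneg_le)
  show "integrable M (\<lambda>\<omega>. real n * G^2 + real n * B^2 * norm (gF (center t \<omega>))^2)"
    using grad_center_sq_integrable by simp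
  show "(\<lambda>\<omega>. norm (gf i (center t \<omega>))^2) \<in> borel_measurable M"
    using measurable_compose[OF center_borel gf_borel[OF i]] by measurable
qed (use norm_gf_sq_le[OF i] in auto)

definition grad_noise :: "nat \<Rightarrow> nat \<Rightarrow> nat \<Rightarrow> 'a \<Rightarrow> 'v" where
  "grad_noise r i q \<omega> = htil r i q \<omega> - gf i (xq r i q \<omega>)"

lemma query_sa_eq: "query_sa M n S E htil r i q = sigma_sets (space M) (query_gen r i q)"
  by (simp add: query_sa_def query_gen_def)

lemma grad_noise_sq_integrable_le:
  assumes r: "r \<ge> 1" and i: "i \<in> {1..n}" and q: "q \<ge> 1"
  shows "integrable M (\<lambda>\<omega>. norm (grad_noise r i q \<omega>)^2)" and "(\<integral>\<omega>. norm (grad_noise r i q \<omega>)^2 \<partial>M) \<le> \<sigma>^2"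
proof -
  have "space M \<in> query_sa M n S E htil r i q" unfolding query_sa_eq by (rule sigma_sets_top)
  from noise_var[OF r i q this]
  have "(\<integral>\<^sup>+\<omega>. indicator (space M) \<omega> * ennreal (norm (grad_noise r i q \<omega>)^2) \<partial>M) \<le> ennreal (\<sigma>^2)"
    by (simp add: grad_noise_def emeasure_space_1)
  moreover have "(\<integral>\<^sup>+\<omega>. indicator (space M) \<omega> * ennreal (norm (grad_noise r i q \<omega>)^2) \<partial>M)
      = (\<integral>\<^sup>+\<omega>. ennreal (norm (grad_noise r i q \<omega>)^2) \<partial>M)"
    by (rule nn_integral_cong) simp
  ultimately have nn: "(\<integral>\<^sup>+\<omega>. ennreal (norm (grad_noise r i q \<omega>)^2) \<partial>M) \<le> ennreal (\<sigma>^2)" by simp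
  have "grad_noise r i q \<in> borel_measurable M" using noise_int[OF r i q] by (simp add: grad_noise_def[abs_def])
  then show int: "integrable M (\<lambda>\<omega>. norm (grad_noise r i q \<omega>)^2)"
    using nn by (intro integrableI_nonneg) (auto simp: order_le_less_trans)
  have "ennreal (\<integral>\<omega>. norm (grad_noise r i q \<omega>)^2 \<partial>M) \<le> ennreal (\<sigma>^2)"
    using nn int by (simp add: nn_integral_eq_integral)
  then show "(\<integral>\<omega>. norm (grad_noise r i q \<omega>)^2 \<partial>M) \<le> \<sigma>^2" by simp
qed

lemma grad_noise_orthogonal:
  assumes r: "r \<ge> 1" and i: "i \<in> {1..n}" and q: "q \<ge> 1"
    and X: "X \<in> borel_measurable (sigma (space M) (query_gen r i q))"
    and X_sq: "integrable M (\<lambda>\<omega>. norm (X \<omega>)^2)"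
  shows "(\<integral>\<omega>. X \<omega> \<bullet> grad_noise r i q \<omega> \<partial>M) = 0"
proof (rule integral_inner_eq_0_if_cond_mean_0[OF query_gen_events[OF r i] X _ _ X_sq])
  show "integrable M (grad_noise r i q)" using noise_int[OF r i q] by (simp add: grad_noise_def[abs_def])
  show "set_lebesgue_integral M A (grad_noise r i q) = 0" if "A \<in> sigma_sets (space M) (query_gen r i q)" for A
    using noise_mean[OF r i q] that by (simp add: grad_noise_def[abs_def] query_sa_eq)
qed (rule grad_noise_sq_integrable_le[OF r i q])

lemma AE_grad_noise:
  "AE \<omega> in M. grad_noise (Suc t) i q \<omega>
     = htil (Suc t) i q \<omega> - gf i (snd (iterates t \<omega>) i - \<eta> *\<^sub>R (\<Sum>p = 1..<q. htil (Suc t) i p \<omega>))"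
  using AE_query[of t i q] by eventually_elim (simp add: grad_noise_def)

lemma client_local_steps:
  assumes i: "i \<in> {1..n}"
  shows "local_steps M K \<eta> L \<sigma> (gf i) (\<lambda>\<omega>. snd (iterates t \<omega>) i) (center t) (\<lambda>\<omega>. gF (center t \<omega>))
    (htil (Suc t) i)"
proof -
  define \<xi> where "\<xi> q \<omega> = htil (Suc t) i q \<omega>
    - gf i (snd (iterates t \<omega>) i - \<eta> *\<^sub>R (\<Sum>p = 1..<q. htil (Suc t) i p \<omega>))" for q \<omega>
  have \<xi>_borel: "\<xi> q \<in> borel_measurable M" if "q \<ge> 1" for q
  proof -
    have "(\<lambda>\<omega>. snd (iterates t \<omega>) i - \<eta> *\<^sub>R (\<Sum>p = 1..<q. htil (Suc t) i p \<omega>)) \<in> borel_measurable M"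
      using iterates_borel htil_meas i by measurable
    from measurable_compose[OF this gf_borel[OF i]] show ?thesis
      unfolding \<xi>_def[abs_def] using htil_meas i that by measurable
  qed
  have AE_\<xi>: "AE \<omega> in M. grad_noise (Suc t) i q \<omega> = \<xi> q \<omega>" for q
    using AE_grad_noise[of t i q] by (simp add: \<xi>_def)
  have grad_noise_borel: "q \<ge> 1 \<Longrightarrow> grad_noise (Suc t) i q \<in> borel_measurable M" for q
    using noise_int[of "Suc t" i q] i by (simp add: grad_noise_def[abs_def])
  have \<xi>_sq: "integrable M (\<lambda>\<omega>. norm (\<xi> q \<omega>)^2)"
    and \<xi>_sq_le: "(\<integral>\<omega>. norm (\<xi> q \<omega>)^2 \<partial>M) \<le> \<sigma>^2" if q: "q \<ge> 1" for q
  proof -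
    have AE: "AE \<omega> in M. norm (\<xi> q \<omega>)^2 = norm (grad_noise (Suc t) i q \<omega>)^2"
      using AE_\<xi>[of q] by eventually_elim simp
    have m: "(\<lambda>\<omega>. norm (\<xi> q \<omega>)^2) \<in> borel_measurable M"
      and m': "(\<lambda>\<omega>. norm (grad_noise (Suc t) i q \<omega>)^2) \<in> borel_measurable M"
      using \<xi>_borel[OF q] grad_noise_borel[OF q] by measurable
    note noise_sq = grad_noise_sq_integrable_le[of "Suc t", OF _ i q, simplified]
    show "integrable M (\<lambda>\<omega>. norm (\<xi> q \<omega>)^2)"
      by (rule integrable_cong_AE_imp[OF noise_sq(1) m]) (use AE in \<open>auto elim: AE_symmetric\<close>)
    show "(\<integral>\<omega>. norm (\<xi> q \<omega>)^2 \<partial>M) \<le> \<sigma>^2"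
      using integral_cong_AE[OF m m' AE] noise_sq(2) by simp
  qed
  have \<xi>_orth: "(\<integral>\<omega>. gF (center t \<omega>) \<bullet> \<xi> q \<omega> \<partial>M) = 0" if q: "q \<ge> 1" for q
  proof -
    have "past_gen M n S E htil t \<subseteq> query_gen (Suc t) i q" by (simp add: query_gen_def)
    then have g: "(\<lambda>\<omega>. gF (center t \<omega>)) \<in> borel_measurable (sigma (space M) (query_gen (Suc t) i q))"
      using query_gen_events[of "Suc t" i q] i by (intro grad_center_measurable) auto
    have AE: "AE \<omega> in M. gF (center t \<omega>) \<bullet> \<xi> q \<omega> = gF (center t \<omega>) \<bullet> grad_noise (Suc t) i q \<omega>"
      using AE_\<xi>[of q] by eventually_elim simp
    have "(\<integral>\<omega>. gF (center t \<omega>) \<bullet> \<xi> q \<omega> \<partial>M) = (\<integral>\<omega>. gF (center t \<omega>) \<bullet> grad_noise (Suc t) i q \<omega> \<partial>M)"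
      using grad_center_borel \<xi>_borel[OF q] grad_noise_borel[OF q] by (intro integral_cong_AE[OF _ _ AE]; measurable)
    also have "\<dots> = 0"
      using grad_noise_orthogonal[OF _ i q g grad_center_sq_integrable] by simp
    finally show ?thesis .
  qed
  show ?thesis
  proof (unfold_locales, fold \<xi>_def)
    show "0 \<le> L" by (rule L)
    show "\<eta>^2 * real K^2 * L^2 \<le> 1/16" by (rule step_small)
    show "norm (gf i x - gf i y) \<le> L * norm (x - y)" for x y by (rule lip[OF i])
    show "(\<lambda>\<omega>. snd (iterates t \<omega>) i) \<in> borel_measurable M" "center t \<in> borel_measurable M"
      "(\<lambda>\<omega>. gF (center t \<omega>)) \<in> borel_measurable M"
      by (rule iterates_borel center_borel grad_center_borel)+
    show "integrable M (\<lambda>\<omega>. norm (gF (center t \<omega>))^2)" by (rule grad_center_sq_integrable)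
    show "integrable M (\<lambda>\<omega>. norm (snd (iterates t \<omega>) i - center t \<omega>)^2)"
      by (rule client_dev_sq_integrable[OF i])
    show "integrable M (\<lambda>\<omega>. norm (gf i (center t \<omega>))^2)" by (rule gf_center_sq_integrable[OF i])
    fix q assume "q \<in> {1..K}"
    then have q: "q \<ge> 1" by simp
    show "htil (Suc t) i q \<in> borel_measurable M" using htil_meas[OF _ i q] by simp
    show "integrable M (\<lambda>\<omega>. norm (htil (Suc t) i q \<omega>)^2)" using int_htil[OF _ i q] by simp
    show "integrable M (\<lambda>\<omega>. norm (\<xi> q \<omega>)^2)" by (rule \<xi>_sq[OF q])
    show "(\<integral>\<omega>. norm (\<xi> q \<omega>)^2 \<partial>M) \<le> \<sigma>^2" by (rule \<xi>_sq_le[OF q])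
    show "(\<integral>\<omega>. gF (center t \<omega>) \<bullet> \<xi> q \<omega> \<partial>M) = 0" by (rule \<xi>_orth[OF q])
  qed
qed

lemma client_bound:
  assumes i: "i \<in> {1..n}"
  shows "(\<integral>\<omega>. gF (center t \<omega>) \<bullet> - hc (Suc t) i \<omega> \<partial>M)
    \<le> - (\<integral>\<omega>. gF (center t \<omega>) \<bullet> gf i (center t \<omega>) \<partial>M) + (\<integral>\<omega>. norm (gF (center t \<omega>))^2 \<partial>M) / 4
      + L^2 * (20 * (\<integral>\<omega>. norm (snd (iterates t \<omega>) i - center t \<omega>)^2 \<partial>M) + 4 * \<eta>^2 * real K^2 * \<sigma>^2
        + 16 * \<eta>^2 * real K^2 * (\<integral>\<omega>. norm (gf i (center t \<omega>))^2 \<partial>M))"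
proof -
  interpret local_steps M K \<eta> L \<sigma> "gf i" "\<lambda>\<omega>. snd (iterates t \<omega>) i" "center t" "\<lambda>\<omega>. gF (center t \<omega>)"
    "htil (Suc t) i"
    by (rule client_local_steps[OF i])
  have E_i: "E (Suc t) i \<in> measurable M (count_space UNIV)" using E_meas[OF _ i] by simp
  have E_pos_i: "0 < prob {\<omega> \<in> space M. 0 < E (Suc t) i \<omega>}" using E_pos[OF _ i] by simp
  let ?c = "fav_weight M stoch K E (Suc t) i"
  have new: "new_gen (Suc t) \<subseteq> events" and other: "other_gen (Suc t) \<subseteq> events"
    by (simp_all add: new_gen_events other_gen_events)
  have indep: "prob (a \<inter> c) = prob a * prob c"
    if "a \<in> sigma_sets (space M) (new_gen (Suc t))" "c \<in> sigma_sets (space M) (other_gen (Suc t))" for a c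
    using indep_new[of "Suc t" a c] that by (simp add: new_gen_def other_gen_def other_sa_def)
  have "E (Suc t) i \<in> measurable (sigma (space M) (new_gen (Suc t))) (count_space UNIV)"
    by (rule measurable_sigma_gen_events[OF _ new]) (use i in \<open>auto simp: new_gen_def\<close>)
  then have c_meas: "?c q \<in> borel_measurable (sigma (space M) (new_gen (Suc t)))" for q
    by (rule fav_weight_measurable[where E=E and t="Suc t" and i=i, OF K E_i E_pos_i])
  have c_bound: "\<bar>?c q \<omega>\<bar> \<le> 1 / prob {\<omega> \<in> space M. 0 < E (Suc t) i \<omega>}" for q \<omega>
    using fav_weight_nonneg[where E=E and t="Suc t" and i=i, OF K E_i E_pos_i] fav_weight_le[where E=E and t="Suc t" and i=i, OF K E_i E_pos_i] by simp
  have Z_meas: "(\<lambda>\<omega>. gF (center t \<omega>) \<bullet> - htil (Suc t) i q \<omega>) \<in> borel_measurable (sigma (space M) (other_gen (Suc t)))"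
    if q: "q \<in> {1..K}" for q
  proof -
    have "(\<lambda>\<omega>. gF (center t \<omega>)) \<in> borel_measurable (sigma (space M) (other_gen (Suc t)))"
      by (rule grad_center_measurable[OF _ other]) (simp add: other_gen_def)
    moreover have "htil (Suc t) i q \<in> borel_measurable (sigma (space M) (other_gen (Suc t)))"
      by (rule measurable_sigma_gen_events[OF _ other]) (use i q in \<open>auto simp: other_gen_def\<close>)
    ultimately show ?thesis by measurable
  qed
  have Z_int: "integrable M (\<lambda>\<omega>. gF (center t \<omega>) \<bullet> - htil (Suc t) i q \<omega>)" if q: "q \<in> {1..K}" for q
    using g_borel ht_borel[OF q] g_sq ht_sq[OF q] by (intro integrable_inner_if_sq_integrable) auto
  note factor = integral_mult_indep_sigma[OF new other indep c_meas c_bound Z_meas Z_int]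
  show ?thesis
  proof (rule weighted_gradient_bound[where c="?c"])
    show "hc (Suc t) i \<omega> = (\<Sum>q = 1..K. ?c q \<omega> *\<^sub>R htil (Suc t) i q \<omega>)" for \<omega>
      by (rule fav_hc_eq_weighted_sum)
    show "0 \<le> (\<integral>\<omega>. ?c q \<omega> \<partial>M)" for q
      using fav_weight_nonneg[where E=E and t="Suc t" and i=i, OF K E_i E_pos_i] by (simp add: integral_nonneg_AE)
    show "(\<Sum>q = 1..K. \<integral>\<omega>. ?c q \<omega> \<partial>M) = 1" by (rule fav_weight_expectation_sum[where E=E and t="Suc t" and i=i, OF K E_i E_pos_i])
  qed (use factor in auto)
qed

lemma sum_inner_grad_gf_center:
  "(\<Sum>i = 1..n. \<integral>\<omega>. gF (center t \<omega>) \<bullet> gf i (center t \<omega>) \<partial>M) = real n * (\<integral>\<omega>. norm (gF (center t \<omega>))^2 \<partial>M)"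
proof -
  have int: "integrable M (\<lambda>\<omega>. gF (center t \<omega>) \<bullet> gf i (center t \<omega>))" if i: "i \<in> {1..n}" for i
    using grad_center_borel measurable_compose[OF center_borel gf_borel[OF i]] grad_center_sq_integrable
      gf_center_sq_integrable[OF i]
    by (intro integrable_inner_if_sq_integrable) (auto simp: comp_def)
  have "(\<Sum>i = 1..n. \<integral>\<omega>. gF (center t \<omega>) \<bullet> gf i (center t \<omega>) \<partial>M)
      = (\<integral>\<omega>. (\<Sum>i = 1..n. gF (center t \<omega>) \<bullet> gf i (center t \<omega>)) \<partial>M)"
    by (rule Bochner_Integration.integral_sum[symmetric]) (use int in auto)
  also have "\<dots> = (\<integral>\<omega>. real n * norm (gF (center t \<omega>))^2 \<partial>M)"
    by (rule Bochner_Integration.integral_cong[OF refl]) (simp only: sum_inner_gf power2_norm_eq_inner)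
  finally show ?thesis by simp
qed

lemma sum_client_dev_le_potential:
  "(\<Sum>i = 1..n. \<integral>\<omega>. norm (snd (iterates t \<omega>) i - center t \<omega>)^2 \<partial>M) \<le> (\<integral>\<omega>. potential t \<omega> \<partial>M)"
proof -
  have "(\<Sum>i = 1..n. \<integral>\<omega>. norm (snd (iterates t \<omega>) i - center t \<omega>)^2 \<partial>M)
      = (\<integral>\<omega>. (\<Sum>i = 1..n. norm (snd (iterates t \<omega>) i - center t \<omega>)^2) \<partial>M)"
    by (rule Bochner_Integration.integral_sum[symmetric]) (use client_dev_sq_integrable in auto)
  also have "\<dots> \<le> (\<integral>\<omega>. potential t \<omega> \<partial>M)"
  proof (rule integral_mono[OF _ potential_integrable])
    show "integrable M (\<lambda>\<omega>. \<Sum>i = 1..n. norm (snd (iterates t \<omega>) i - center t \<omega>)^2)"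
      using client_dev_sq_integrable by (intro Bochner_Integration.integrable_sum) auto
  qed (simp add: potential_def)
  finally show ?thesis .
qed

lemma sum_gf_center_sq_le:
  "(\<Sum>i = 1..n. \<integral>\<omega>. norm (gf i (center t \<omega>))^2 \<partial>M)
    \<le> real n * G^2 + real n * B^2 * (\<integral>\<omega>. norm (gF (center t \<omega>))^2 \<partial>M)"
proof -
  have "(\<Sum>i = 1..n. \<integral>\<omega>. norm (gf i (center t \<omega>))^2 \<partial>M) = (\<integral>\<omega>. (\<Sum>i = 1..n. norm (gf i (center t \<omega>))^2) \<partial>M)"
    by (rule Bochner_Integration.integral_sum[symmetric]) (use gf_center_sq_integrable in auto)
  also have "\<dots> \<le> (\<integral>\<omega>. real n * G^2 + real n * B^2 * norm (gF (center t \<omega>))^2 \<partial>M)"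
    using gf_center_sq_integrable grad_center_sq_integrable sum_norm_gf_sq_le by (intro integral_mono) auto
  also have "\<dots> = real n * G^2 + real n * B^2 * (\<integral>\<omega>. norm (gF (center t \<omega>))^2 \<partial>M)"
    using grad_center_sq_integrable by (simp add: prob_space)
  finally show ?thesis .
qed

lemma inner_sum_bound_iterates:
  "(\<Sum>i = 1..n. \<integral>\<omega>. gF (center t \<omega>) \<bullet> - hc (Suc t) i \<omega> \<partial>M)
    \<le> 20 * L^2 * (\<integral>\<omega>. potential t \<omega> \<partial>M) + 4 * real n * L^2 * \<eta>^2 * real K^2 * (\<sigma>^2 + 4 * G^2)
      + real n * (16 * L^2 * \<eta>^2 * real K^2 * B^2 - 3 / 4) * (\<integral>\<omega>. norm (gF (center t \<omega>))^2 \<partial>M)"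
proof -
  define g where "g = (\<integral>\<omega>. norm (gF (center t \<omega>))^2 \<partial>M)"
  define I where "I i = (\<integral>\<omega>. gF (center t \<omega>) \<bullet> gf i (center t \<omega>) \<partial>M)" for i
  define a where "a i = (\<integral>\<omega>. norm (snd (iterates t \<omega>) i - center t \<omega>)^2 \<partial>M)" for i
  define b where "b i = (\<integral>\<omega>. norm (gf i (center t \<omega>))^2 \<partial>M)" for i
  define e where "e = \<eta>^2 * real K^2"
  have "(\<Sum>i = 1..n. \<integral>\<omega>. gF (center t \<omega>) \<bullet> - hc (Suc t) i \<omega> \<partial>M)
      \<le> (\<Sum>i = 1..n. - I i + g / 4 + L^2 * (20 * a i + 4 * e * \<sigma>^2 + 16 * e * b i))"
    using client_bound by (intro sum_mono) (simp add: g_def I_def a_def b_def e_def mult.assoc)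
  also have "\<dots> = - (\<Sum>i = 1..n. I i) + real n * (g / 4 + 4 * L^2 * e * \<sigma>^2)
      + 20 * L^2 * (\<Sum>i = 1..n. a i) + 16 * L^2 * e * (\<Sum>i = 1..n. b i)"
  proof -
    have "- I i + g / 4 + L^2 * (20 * a i + 4 * e * \<sigma>^2 + 16 * e * b i)
        = - I i + (g / 4 + 4 * L^2 * e * \<sigma>^2) + 20 * L^2 * a i + 16 * L^2 * e * b i" for i
      by (simp add: algebra_simps)
    then show ?thesis by (simp only: sum.distrib sum_negf sum_distrib_left[symmetric]) (simp add: algebra_simps)
  qed
  also have "\<dots> \<le> - (real n * g) + real n * (g / 4 + 4 * L^2 * e * \<sigma>^2)
      + 20 * L^2 * (\<integral>\<omega>. potential t \<omega> \<partial>M) + 16 * L^2 * e * (real n * G^2 + real n * B^2 * g)"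
    using sum_inner_grad_gf_center[of t] sum_client_dev_le_potential[of t] sum_gf_center_sq_le[of t]
    by (intro add_mono mult_left_mono order_refl) (auto simp: g_def I_def a_def b_def e_def)
  also have "\<dots> = 20 * L^2 * (\<integral>\<omega>. potential t \<omega> \<partial>M) + 4 * real n * L^2 * \<eta>^2 * real K^2 * (\<sigma>^2 + 4 * G^2)
      + real n * (16 * L^2 * \<eta>^2 * real K^2 * B^2 - 3 / 4) * g"
    by (simp add: e_def algebra_simps)
  finally show ?thesis by (simp add: g_def)
qed

lemma inner_sum_bound:
  "(\<Sum>i = 1..n. \<integral>\<omega>. gF (fav_mu M stoch K \<eta> n s w0 S E htil t \<omega>) \<bullet> (- hc (t + 1) i \<omega>) \<partial>M)
    \<le> 20 * L^2 * (\<integral>\<omega>. fav_Phi M stoch K \<eta> n s w0 S E htil t \<omega> \<partial>M)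
      + 4 * real n * L^2 * \<eta>^2 * real K^2 * (\<sigma>^2 + 4 * G^2)
      + real n * (16 * L^2 * \<eta>^2 * real K^2 * B^2 - 3 / 4)
        * (\<integral>\<omega>. norm (gF (fav_mu M stoch K \<eta> n s w0 S E htil t \<omega>))^2 \<partial>M)"
proof -
  let ?\<mu> = "fav_mu M stoch K \<eta> n s w0 S E htil t"
  have inner: "(\<integral>\<omega>. gF (?\<mu> \<omega>) \<bullet> (- hc (t + 1) i \<omega>) \<partial>M) = (\<integral>\<omega>. gF (center t \<omega>) \<bullet> - hc (Suc t) i \<omega> \<partial>M)"
    if i: "i \<in> {1..n}" for i
  proof (rule integral_cong_AE)
    show "(\<lambda>\<omega>. gF (?\<mu> \<omega>) \<bullet> (- hc (t + 1) i \<omega>)) \<in> borel_measurable M" using int_inner[OF i] by auto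
    show "(\<lambda>\<omega>. gF (center t \<omega>) \<bullet> - hc (Suc t) i \<omega>) \<in> borel_measurable M"
      using grad_center_borel hc_borel[of "Suc t" i] i by measurable
    show "AE \<omega> in M. gF (?\<mu> \<omega>) \<bullet> (- hc (t + 1) i \<omega>) = gF (center t \<omega>) \<bullet> - hc (Suc t) i \<omega>"
      using AE_fav_mu[of t] by eventually_elim simp
  qed
  have "(\<integral>\<omega>. fav_Phi M stoch K \<eta> n s w0 S E htil t \<omega> \<partial>M) = (\<integral>\<omega>. potential t \<omega> \<partial>M)"
    using int_Phi[of t] potential_integrable AE_fav_Phi[of t] by (intro integral_cong_AE) auto
  moreover have "(\<integral>\<omega>. norm (gF (?\<mu> \<omega>))^2 \<partial>M) = (\<integral>\<omega>. norm (gF (center t \<omega>))^2 \<partial>M)"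
    using int_grad[of t] grad_center_sq_integrable AE_fav_mu[of t]
    by (intro integral_cong_AE) (auto elim!: eventually_mono)
  ultimately show ?thesis using inner_sum_bound_iterates[of t] inner by simp
qed

end

theorem mainTheorem9:
  fixes M :: "'a measure"
    and n s K :: nat and \<eta> L \<sigma> G B :: real and stoch :: bool
    and w0 :: "'v::euclidean_space"
    and f :: "nat \<Rightarrow> 'v \<Rightarrow> real" and gf :: "nat \<Rightarrow> 'v \<Rightarrow> 'v" and gF :: "'v \<Rightarrow> 'v"
    and S :: "nat \<Rightarrow> 'a \<Rightarrow> nat set" and E :: "nat \<Rightarrow> nat \<Rightarrow> 'a \<Rightarrow> nat"
    and htil :: "nat \<Rightarrow> nat \<Rightarrow> nat \<Rightarrow> 'a \<Rightarrow> 'v"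
    and t :: nat
  defines "hc \<equiv> fav_hc M stoch K E htil"
    and "xq \<equiv> fav_query M stoch K \<eta> s w0 S E htil"
    and "\<mu> \<equiv> fav_mu M stoch K \<eta> n s w0 S E htil"
    and "\<Phi> \<equiv> fav_Phi M stoch K \<eta> n s w0 S E htil"
  assumes M: "prob_space M"
    and n: "n \<ge> 1" and s: "1 \<le> s" "s \<le> n" and K: "K \<ge> 1" and eta: "\<eta> > 0"
    (* gradients, f = (1/n) sum f_i *)
    and grad_i: "\<And>i x. i \<in> {1..n} \<Longrightarrow> (f i has_derivative (\<lambda>h. gf i x \<bullet> h)) (at x)"
    and grad_f: "\<And>x. ((\<lambda>y. (\<Sum>i = 1..n. f i y) / real n) has_derivative (\<lambda>h. gF x \<bullet> h)) (at x)"
    (* smoothness *)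
    and L: "L > 0"
    and lip: "\<And>i x y. i \<in> {1..n} \<Longrightarrow> norm (gf i x - gf i y) \<le> L * norm (x - y)"
    (* bounded gradient dissimilarity *)
    and B: "B^2 \<ge> 1"
    and dissim: "\<And>x. (\<Sum>i = 1..n. norm (gf i x)^2) / real n \<le> G^2 + B^2 * norm (gF x)^2"
    (* step size *)
    and eta1: "\<eta> < 1 / (4 * L * real K^2)" and eta2: "\<eta> < 1 / (2 * L * real K)"
    (* random variables *)
    and htil_meas: "\<And>r i q. r \<ge> 1 \<Longrightarrow> i \<in> {1..n} \<Longrightarrow> q \<ge> 1 \<Longrightarrow> htil r i q \<in> borel_measurable M"
    and E_meas: "\<And>r i. r \<ge> 1 \<Longrightarrow> i \<in> {1..n} \<Longrightarrow> E r i \<in> measurable M (count_space UNIV)"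
    and S_meas: "\<And>r. r \<ge> 1 \<Longrightarrow> S r \<in> measurable M (count_space UNIV)"
    (* unbiased oracle with bounded variance, conditionally on everything before the query *)
    and noise_int: "\<And>r i q. r \<ge> 1 \<Longrightarrow> i \<in> {1..n} \<Longrightarrow> q \<ge> 1 \<Longrightarrow>
        integrable M (\<lambda>\<omega>. htil r i q \<omega> - gf i (xq r i q \<omega>))"
    and noise_mean: "\<And>r i q A. r \<ge> 1 \<Longrightarrow> i \<in> {1..n} \<Longrightarrow> q \<ge> 1 \<Longrightarrow>
        A \<in> query_sa M n S E htil r i q \<Longrightarrow>
        set_lebesgue_integral M A (\<lambda>\<omega>. htil r i q \<omega> - gf i (xq r i q \<omega>)) = 0"
    and noise_var: "\<And>r i q A. r \<ge> 1 \<Longrightarrow> i \<in> {1..n} \<Longrightarrow> q \<ge> 1 \<Longrightarrow>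
        A \<in> query_sa M n S E htil r i q \<Longrightarrow>
        (\<integral>\<^sup>+\<omega>. indicator A \<omega> * ennreal (norm (htil r i q \<omega> - gf i (xq r i q \<omega>))^2) \<partial>M)
          \<le> ennreal (\<sigma>^2) * emeasure M A"
    (* local step counts *)
    and E_pos: "\<And>r i. r \<ge> 1 \<Longrightarrow> i \<in> {1..n} \<Longrightarrow> measure M {\<omega> \<in> space M. E r i \<omega> > 0} > 0"
    (* uniform client sampling *)
    and S_unif: "\<And>r A. r \<ge> 1 \<Longrightarrow> A \<subseteq> {1..n} \<Longrightarrow> card A = s \<Longrightarrow>
        measure M {\<omega> \<in> space M. S r \<omega> = A} = 1 / real (n choose s)"
    (* (S_r, E_r) independent of the past and of all htil_{r,q}; S_r independent of E_r *)
    and indep_new: "\<And>r A C. r \<ge> 1 \<Longrightarrow>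
        A \<in> sigma_sets (space M) (gen_events M (count_space UNIV) (S r)
               \<union> (\<Union>j\<in>{1..n}. gen_events M (count_space UNIV) (E r j))) \<Longrightarrow>
        C \<in> other_sa M n S E htil r \<Longrightarrow>
        measure M (A \<inter> C) = measure M A * measure M C"
    and indep_SE: "\<And>r A C. r \<ge> 1 \<Longrightarrow>
        A \<in> sigma_sets (space M) (gen_events M (count_space UNIV) (S r)) \<Longrightarrow>
        C \<in> sigma_sets (space M) (\<Union>j\<in>{1..n}. gen_events M (count_space UNIV) (E r j)) \<Longrightarrow>
        measure M (A \<inter> C) = measure M A * measure M C"
    (* all expectations appearing are finite *)
    and int_htil: "\<And>r i q. r \<ge> 1 \<Longrightarrow> i \<in> {1..n} \<Longrightarrow> q \<ge> 1 \<Longrightarrow>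
        integrable M (\<lambda>\<omega>. norm (htil r i q \<omega>)^2)"
    and int_Phi: "\<And>r. integrable M (\<Phi> r)"
    and int_grad: "\<And>r. integrable M (\<lambda>\<omega>. norm (gF (\<mu> r \<omega>))^2)"
    and int_inner: "\<And>r i. i \<in> {1..n} \<Longrightarrow> integrable M (\<lambda>\<omega>. gF (\<mu> r \<omega>) \<bullet> (- hc (r + 1) i \<omega>))"
  shows "(\<Sum>i = 1..n. \<integral>\<omega>. gF (\<mu> t \<omega>) \<bullet> (- hc (t + 1) i \<omega>) \<partial>M)
    \<le> 20 * L^2 * (\<integral>\<omega>. \<Phi> t \<omega> \<partial>M)
       + 4 * real n * L^2 * \<eta>^2 * real K^2 * (\<sigma>^2 + 4 * G^2)
       + real n * (16 * L^2 * \<eta>^2 * real K^2 * B^2 - 3 / 4) * (\<integral>\<omega>. norm (gF (\<mu> t \<omega>))^2 \<partial>M)"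
proof -
  have gF_avg: "gF x = (1 / real n) *\<^sub>R (\<Sum>i = 1..n. gf i x)" for x
    using gradient_of_average[OF grad_i grad_f] .
  have "0 \<le> L" using L by simp
  interpret favano M n s K \<eta> L \<sigma> G B stoch w0 gf gF S E htil
    using n s(2) K gF_avg \<open>0 \<le> L\<close> lip dissim step_size_sq_le[OF eta L K eta1] htil_meas E_meas S_meas
      noise_int noise_mean noise_var E_pos S_unif indep_new int_htil int_Phi int_grad int_inner
    unfolding xq_def \<mu>_def \<Phi>_def hc_def by (rule favano.intro[OF M favano_axioms.intro])
  show ?thesis unfolding hc_def \<mu>_def \<Phi>_def by (rule inner_sum_bound)
qed

end
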